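(* For any natural number $n$, $\{\omega^{n+1}, (\omega^{n+1})^\star\} \leq_c \{\omega^{\omega+n}, (\omega^{\omega+n})^\star\}$.
   Context: Structures have domains contained in $\omega$. For countable structures $\mathcal{A},\mathcal{B}$, the class $\{\mathcal{A},\mathcal{B}\}$ denotes the class of all structures (with domain $\subseteq\omega$) isomorphic to $\mathcal{A}$ or to $\mathcal{B}$. Linear orders are in the language $\{<\}$; $L^\star$ is the reverse of a linear order $L$; $\omega^{n+1}$, $\omega^{\omega+n}$ denote ordinal exponentiation (as order types). An enumeration operator $\Gamma$ is a c.e. set of pairs $(\alpha,\varphi)$ with $\alpha$ a finite set of basic (atomic or negated atomic) sentences of the input language with constants from $\omega$ and $\varphi$ a basic sentence of the output language with constants from $\omega$; $\Gamma(X)=\{\varphi : (\alpha,\varphi)\in\Gamma,\ \alpha\subseteq X\}$. $\Gamma$ is a computable embedding of $\mathcal{K}_0$ into $\mathcal{K}_1$ ($\mathcal{K}_0\leq_c\mathcal{K}_1$) if for every $\mathcal{A}\in\mathcal{K}_0$, $\Gamma$ applied to the atomic diagram of $\mathcal{A}$ is the atomic diagram of a structure $\Gamma(\mathcal{A})\in\mathcal{K}_1$, and for all $\mathcal{A},\mathcal{B}\in\mathcal{K}_0$, $\mathcal{A}\cong\mathcal{B}$ iff $\Gamma(\mathcal{A})\cong\Gamma(\mathcal{B})$. *)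

theory Defs
  imports Main "HOL-Library.Nat_Bijection"
begin

datatype recf = Zf | Sf | Proj nat | Comp recf "recf list" | Prec recf recf | Mu recf

inductive eval :: "recf \<Rightarrow> nat list \<Rightarrow> nat \<Rightarrow> bool" where
  ev_Z: "eval Zf xs 0"
| ev_S: "eval Sf (x # xs) (Suc x)"
| ev_Proj: "i < length xs \<Longrightarrow> eval (Proj i) xs (xs ! i)"
| ev_Comp: "length ys = length gs \<Longrightarrow> (\<forall>i<length gs. eval (gs ! i) xs (ys ! i))
     \<Longrightarrow> eval f ys z \<Longrightarrow> eval (Comp f gs) xs z"
| ev_Prec0: "eval f xs y \<Longrightarrow> eval (Prec f g) (0 # xs) y"
| ev_PrecS: "eval (Prec f g) (n # xs) y \<Longrightarrow> eval g (n # y # xs) z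
     \<Longrightarrow> eval (Prec f g) (Suc n # xs) z"
| ev_Mu: "eval f (y # xs) 0 \<Longrightarrow> (\<forall>k<y. \<exists>v. eval f (k # xs) v \<and> v \<noteq> 0)
     \<Longrightarrow> eval (Mu f) xs y"

definition ce :: "nat set \<Rightarrow> bool" where
  "ce W \<longleftrightarrow> (\<exists>f. \<forall>x. x \<in> W \<longleftrightarrow> (\<exists>y. eval f [x] y))"

datatype atom = AEq nat nat | ALess nat nat
datatype lit = Pos atom | Neg atom

fun enc_atom :: "atom \<Rightarrow> nat" where
  "enc_atom (AEq a b) = 2 * prod_encode (a, b)"
| "enc_atom (ALess a b) = 2 * prod_encode (a, b) + 1"

fun enc_lit :: "lit \<Rightarrow> nat" where
  "enc_lit (Pos a) = 2 * enc_atom a"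
| "enc_lit (Neg a) = 2 * enc_atom a + 1"

type_synonym 'a struc = "'a set \<times> 'a rel"

definition is_struc :: "'a struc \<Rightarrow> bool" where
  "is_struc A \<longleftrightarrow> snd A \<subseteq> fst A \<times> fst A"

definition iso :: "'a struc \<Rightarrow> 'b struc \<Rightarrow> bool" where
  "iso A B \<longleftrightarrow> (\<exists>f. bij_betw f (fst A) (fst B) \<and>
     (\<forall>x\<in>fst A. \<forall>y\<in>fst A. (x, y) \<in> snd A \<longleftrightarrow> (f x, f y) \<in> snd B))"

definition rev_order :: "'a struc \<Rightarrow> 'a struc" where
  "rev_order A = (fst A, (snd A)\<inverse>)"

definition diag :: "nat struc \<Rightarrow> lit set" where
  "diag A =
     {Pos (AEq a a) | a. a \<in> fst A}
   \<union> {Neg (AEq a b) | a b. a \<in> fst A \<and> b \<in> fst A \<and> a \<noteq> b}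
   \<union> {Pos (ALess a b) | a b. a \<in> fst A \<and> b \<in> fst A \<and> (a, b) \<in> snd A}
   \<union> {Neg (ALess a b) | a b. a \<in> fst A \<and> b \<in> fst A \<and> (a, b) \<notin> snd A}"

definition iso_class2 :: "'a struc \<Rightarrow> 'b struc \<Rightarrow> nat struc set" where
  "iso_class2 A B = {C. is_struc C \<and> (iso C A \<or> iso C B)}"

text \<open>An enumeration operator is a c.e. set of pairs (alpha, phi), alpha a finite set
  (given as a list) of basic sentences.\<close>
definition enc_pair :: "lit list \<times> lit \<Rightarrow> nat" where
  "enc_pair p = prod_encode (list_encode (map enc_lit (fst p)), enc_lit (snd p))"

definition enum_op :: "(lit list \<times> lit) set \<Rightarrow> bool" where
  "enum_op \<Gamma> \<longleftrightarrow> ce (enc_pair ` \<Gamma>)"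

definition apply_op :: "(lit list \<times> lit) set \<Rightarrow> lit set \<Rightarrow> lit set" where
  "apply_op \<Gamma> X = {\<phi>. \<exists>\<alpha>. (\<alpha>, \<phi>) \<in> \<Gamma> \<and> set \<alpha> \<subseteq> X}"

definition comp_embedding :: "(lit list \<times> lit) set \<Rightarrow> nat struc set \<Rightarrow> nat struc set \<Rightarrow> bool" where
  "comp_embedding \<Gamma> K0 K1 \<longleftrightarrow> enum_op \<Gamma> \<and>
     (\<forall>A\<in>K0. \<exists>B\<in>K1. apply_op \<Gamma> (diag A) = diag B) \<and>
     (\<forall>A\<in>K0. \<forall>A'\<in>K0. \<forall>B B'. is_struc B \<longrightarrow> is_struc B' \<longrightarrow>
        apply_op \<Gamma> (diag A) = diag B \<longrightarrow> apply_op \<Gamma> (diag A') = diag B' \<longrightarrow>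
        (iso A A' \<longleftrightarrow> iso B B'))"

definition comp_reducible :: "nat struc set \<Rightarrow> nat struc set \<Rightarrow> bool" (infix "\<le>\<^sub>c" 50) where
  "K0 \<le>\<^sub>c K1 \<longleftrightarrow> (\<exists>\<Gamma>. comp_embedding \<Gamma> K0 K1)"

text \<open>omega^beta for a well-order (I, lt): finitely supported functions I \<rightarrow> omega,
  compared at the largest argument where they differ (standard definition of ordinal
  exponentiation, as in HOL-Cardinals' oexp).\<close>
definition omega_pow :: "'i set \<Rightarrow> 'i rel \<Rightarrow> ('i \<Rightarrow> nat) struc" where
  "omega_pow I lt =
     (let D = {f. finite {i. f i \<noteq> 0} \<and> {i. f i \<noteq> 0} \<subseteq> I} in
      (D, {(f, g). f \<in> D \<and> g \<in> D \<and>
             (\<exists>i\<in>I. f i < g i \<and> (\<forall>j\<in>I. (i, j) \<in> lt \<longrightarrow> f j = g j))}))"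

definition omega_pow_nat :: "nat \<Rightarrow> (nat \<Rightarrow> nat) struc" where
  "omega_pow_nat k = omega_pow {..<k} {(i, j). i < j}"

text \<open>The ordinal omega + n, realised on nat + nat: all Inl's (order type omega)
  followed by Inr 0 < ... < Inr (n-1).\<close>
definition omega_plus_lt :: "(nat + nat) rel" where
  "omega_plus_lt = {(Inl a, Inl b) | a b. a < b} \<union> {(Inl a, Inr b) | a b. True}
                  \<union> {(Inr a, Inr b) | a b. a < b}"

definition omega_pow_omega_plus :: "nat \<Rightarrow> (nat + nat \<Rightarrow> nat) struc" where
  "omega_pow_omega_plus n = omega_pow (range Inl \<union> Inr ` {..<n}) omega_plus_lt"

end

theory Submission
  imports Defs
begin

text \<open>For a linear order \<open>A\<close> on \<open>\<omega>\<close> let \<open>\<Phi>(A)\<close> be the lexicographic order on the lists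
  \<open>a # xs\<close> with \<open>a \<in> A\<close> and \<open>xs \<in> A\<^sup>a\<close>, i.e. the lexicographic sum of the powers \<open>A\<^sup>a\<close>.
  If \<open>A \<cong> \<omega>\<^sup>n\<^sup>+\<^sup>1\<close> then \<open>\<Phi>(A) \<cong> \<omega>\<^sup>\<omega>\<^sup>+\<^sup>n\<close>: both are well-orders, \<open>\<omega>\<^sup>\<omega>\<^sup>+\<^sup>n\<close> embeds into \<open>\<Phi>(A)\<close> by
  coding the part above \<open>\<omega>\<^sup>\<omega>\<close> (shifted by a suitable finite amount) into the head and the
  coefficients below \<open>\<omega>\<^sup>\<omega>\<close> into the tail, \<open>\<Phi>(A)\<close> embeds into \<open>\<omega>\<^sup>\<omega>\<^sup>+\<^sup>n\<close> by spreading the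
  tail over blocks of finite degrees, and well-orders embedding into each other are
  isomorphic. As \<open>\<Phi>\<close> commutes with reversal and neither \<open>\<omega>\<^sup>n\<^sup>+\<^sup>1\<close> nor \<open>\<omega>\<^sup>\<omega>\<^sup>+\<^sup>n\<close> is isomorphic to
  its reverse, \<open>\<Phi>\<close> preserves and reflects isomorphism on the class.

  Coded on \<open>\<omega>\<close> via \<open>list_encode\<close>, each basic sentence about \<open>\<Phi>(A)\<close> is decided by finitely
  many basic sentences about \<open>A\<close>, uniformly in \<open>A\<close>; the operator \<open>\<Gamma>\<close> collecting these
  finite derivations is c.e., and it maps the diagram of \<open>A\<close> to that of \<open>\<Phi>(A)\<close>.\<close>

section \<open>Ordinal powers of \<open>\<omega>\<close>\<close>

abbreviation nat_less :: "nat rel" where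
  "nat_less \<equiv> {(i, j). i < j}"

definition omega_pow_dom :: "'i set \<Rightarrow> ('i \<Rightarrow> nat) set" where
  "omega_pow_dom I = {f. finite {i. f i \<noteq> 0} \<and> {i. f i \<noteq> 0} \<subseteq> I}"

definition omega_pow_less :: "'i set \<Rightarrow> 'i rel \<Rightarrow> ('i \<Rightarrow> nat) rel" where
  "omega_pow_less I lt = {(f, g). f \<in> omega_pow_dom I \<and> g \<in> omega_pow_dom I \<and>
      (\<exists>i\<in>I. f i < g i \<and> (\<forall>j\<in>I. (i, j) \<in> lt \<longrightarrow> f j = g j))}"

lemma omega_pow_eq: "omega_pow I lt = (omega_pow_dom I, omega_pow_less I lt)"
  by (simp add: omega_pow_def omega_pow_dom_def omega_pow_less_def Let_def)

lemma omega_pow_lessI: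
  assumes "f \<in> omega_pow_dom I" "g \<in> omega_pow_dom I" "i \<in> I" "f i < g i"
    and "\<And>j. j \<in> I \<Longrightarrow> (i, j) \<in> lt \<Longrightarrow> f j = g j"
  shows "(f, g) \<in> omega_pow_less I lt"
  using assms unfolding omega_pow_less_def by blast

lemma omega_pow_lessE:
  assumes "(f, g) \<in> omega_pow_less I lt"
  obtains i where "f \<in> omega_pow_dom I" "g \<in> omega_pow_dom I" "i \<in> I" "f i < g i"
    "\<And>j. j \<in> I \<Longrightarrow> (i, j) \<in> lt \<Longrightarrow> f j = g j"
  using assms unfolding omega_pow_less_def by blast

lemma omega_pow_less_irrefl: "(f, f) \<notin> omega_pow_less I lt"
  by (auto elim: omega_pow_lessE)

lemma omega_pow_less_trans:
  assumes lin: "strict_linear_order_on I lt"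
    and fg: "(f, g) \<in> omega_pow_less I lt" and gh: "(g, h) \<in> omega_pow_less I lt"
  shows "(f, h) \<in> omega_pow_less I lt"
proof -
  obtain i where f: "f \<in> omega_pow_dom I" and i: "i \<in> I" "f i < g i"
    and above_i: "\<And>j. j \<in> I \<Longrightarrow> (i, j) \<in> lt \<Longrightarrow> f j = g j"
    using fg by (elim omega_pow_lessE) blast
  obtain k where h: "h \<in> omega_pow_dom I" and k: "k \<in> I" "g k < h k"
    and above_k: "\<And>j. j \<in> I \<Longrightarrow> (k, j) \<in> lt \<Longrightarrow> g j = h j"
    using gh by (elim omega_pow_lessE) blast
  have tr: "trans lt" and tot: "i = k \<or> (i, k) \<in> lt \<or> (k, i) \<in> lt"
    using lin i(1) k(1) by (auto simp: strict_linear_order_on_def total_on_def)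
  then consider "i = k" | "(i, k) \<in> lt" | "(k, i) \<in> lt" by blast
  then show ?thesis
  proof cases
    case 1
    then show ?thesis using f h i k above_i above_k by (intro omega_pow_lessI[where i = i]) auto
  next
    case 2
    then show ?thesis using f h i k above_i above_k tr
      by (intro omega_pow_lessI[where i = k]) (auto dest: transD)
  next
    case 3
    then show ?thesis using f h i k above_i above_k tr
      by (intro omega_pow_lessI[where i = i]) (auto dest: transD)
  qed
qed

lemma finite_has_lt_maximal:
  assumes lin: "strict_linear_order_on I lt" and "finite S" "S \<noteq> {}" "S \<subseteq> I"
  obtains m where "m \<in> S" "\<And>j. j \<in> S \<Longrightarrow> (m, j) \<notin> lt"
proof -
  let ?r = "(lt \<inter> S \<times> S)\<inverse>"
  have "trans lt" "irrefl lt" using lin by (auto simp: strict_linear_order_on_def)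
  then have "trans ?r" "irrefl ?r" unfolding trans_def irrefl_def by blast+
  moreover have "finite ?r" using \<open>finite S\<close> by blast
  ultimately have "wf ?r" by (intro finite_acyclic_wf) (simp_all add: acyclic_irrefl)
  then obtain m where "m \<in> S" "\<And>y. (y, m) \<in> ?r \<Longrightarrow> y \<notin> S"
    using wfE_min \<open>S \<noteq> {}\<close> by (metis ex_in_conv)
  then show ?thesis using that by blast
qed

lemma omega_pow_less_total:
  assumes lin: "strict_linear_order_on I lt"
    and f: "f \<in> omega_pow_dom I" and g: "g \<in> omega_pow_dom I" and "f \<noteq> g"
  shows "(f, g) \<in> omega_pow_less I lt \<or> (g, f) \<in> omega_pow_less I lt"
proof -
  let ?S = "{i. f i \<noteq> g i}"
  have "?S \<subseteq> {i. f i \<noteq> 0} \<union> {i. g i \<noteq> 0}" by auto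
  then have "finite ?S" "?S \<subseteq> I"
    using f g by (auto simp: omega_pow_dom_def intro: finite_subset)
  moreover have "?S \<noteq> {}" using \<open>f \<noteq> g\<close> by auto
  ultimately obtain m where m: "m \<in> ?S" "\<And>j. j \<in> ?S \<Longrightarrow> (m, j) \<notin> lt"
    using finite_has_lt_maximal[OF lin] by blast
  then have "m \<in> I" "\<And>j. j \<in> I \<Longrightarrow> (m, j) \<in> lt \<Longrightarrow> f j = g j" using \<open>?S \<subseteq> I\<close> by auto
  then show ?thesis using m(1) f g
    by (cases "f m < g m") (auto intro!: omega_pow_lessI[where i = m])
qed

lemma omega_pow_less_increment:
  assumes lin: "strict_linear_order_on I lt" and f: "f \<in> omega_pow_dom I" and "i \<in> I"
  shows "(f, f(i := Suc (f i))) \<in> omega_pow_less I lt"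
proof -
  have "{j. (f(i := Suc (f i))) j \<noteq> 0} \<subseteq> insert i {j. f j \<noteq> 0}" by auto
  moreover have "finite (insert i {j. f j \<noteq> 0})" "insert i {j. f j \<noteq> 0} \<subseteq> I"
    using f \<open>i \<in> I\<close> by (auto simp: omega_pow_dom_def)
  ultimately have "f(i := Suc (f i)) \<in> omega_pow_dom I"
    unfolding omega_pow_dom_def by (blast intro: finite_subset)
  moreover have "\<And>j. (i, j) \<in> lt \<Longrightarrow> j \<noteq> i"
    using lin by (auto simp: strict_linear_order_on_def irrefl_def)
  ultimately show ?thesis using f \<open>i \<in> I\<close> by (intro omega_pow_lessI[where i = i]) auto
qed

lemma zero_in_omega_pow_dom: "(\<lambda>_. 0) \<in> omega_pow_dom I"
  by (simp add: omega_pow_dom_def)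

lemma omega_pow_less_zero:
  assumes "strict_linear_order_on I lt" "f \<in> omega_pow_dom I" "f \<noteq> (\<lambda>_. 0)"
  shows "((\<lambda>_. 0), f) \<in> omega_pow_less I lt"
  using omega_pow_less_total[OF assms(1) zero_in_omega_pow_dom assms(2)] assms(3)
  by (auto elim: omega_pow_lessE)

lemma strict_linear_order_on_nat_less: "strict_linear_order_on I nat_less"
  by (auto simp: strict_linear_order_on_def trans_def irrefl_def total_on_def)

lemma strict_linear_order_on_omega_plus_lt: "strict_linear_order_on I omega_plus_lt"
  unfolding strict_linear_order_on_def trans_def irrefl_def total_on_def omega_plus_lt_def
  by auto (metis sum.exhaust nat_neq_iff)+

text \<open>For a finite exponent, reading a function from the top coefficient down embeds
  \<open>\<omega>\<^sup>k\<close> into the lexicographic order on lists of length \<open>k\<close>.\<close>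

lemma omega_pow_less_nat_imp_lex:
  assumes "(f, g) \<in> omega_pow_less {..<k} nat_less"
  shows "(map f (rev [0..<k]), map g (rev [0..<k])) \<in> lex less_than"
proof -
  obtain i where i: "i < k" "f i < g i" and above: "\<And>j. j < k \<Longrightarrow> i < j \<Longrightarrow> f j = g j"
    using assms by (auto elim!: omega_pow_lessE)
  have split: "rev [0..<k] = rev [Suc i..<k] @ i # rev [0..<i]"
    using upt_add_eq_append[of 0 i "k - i"] upt_conv_Cons[of i k] i(1) by simp
  have "map f (rev [Suc i..<k]) = map g (rev [Suc i..<k])"
    using above by auto
  then show ?thesis
    unfolding lex_conv split using i(2) by (fastforce simp: less_than_iff)
qed

lemma wf_omega_pow_less_nat: "wf (omega_pow_less {..<k} nat_less)"
proof (rule wf_subset)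
  show "wf (inv_image (lex less_than) (\<lambda>f. map f (rev [0..<k])))"
    by (intro wf_inv_image wf_lex wf_less_than)
qed (use omega_pow_less_nat_imp_lex in auto)

section \<open>Linear orders as structures\<close>

definition is_linorder :: "'a struc \<Rightarrow> bool" where
  "is_linorder A \<longleftrightarrow> is_struc A \<and> strict_linear_order_on (fst A) (snd A)"

lemma is_linorderD:
  assumes "is_linorder A"
  shows "snd A \<subseteq> fst A \<times> fst A" "trans (snd A)" "(x, x) \<notin> snd A"
    "x \<in> fst A \<Longrightarrow> y \<in> fst A \<Longrightarrow> x \<noteq> y \<Longrightarrow> (x, y) \<in> snd A \<or> (y, x) \<in> snd A"
  using assms
  by (auto simp: is_linorder_def is_struc_def strict_linear_order_on_def irrefl_def total_on_def)

lemma is_linorder_asym: "is_linorder A \<Longrightarrow> (x, y) \<in> snd A \<Longrightarrow> (y, x) \<notin> snd A"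
  using is_linorderD(2,3) by (metis transD)

lemma is_linorder_omega_pow:
  assumes "strict_linear_order_on I lt"
  shows "is_linorder (omega_pow I lt)"
proof -
  have "trans (omega_pow_less I lt)"
    using omega_pow_less_trans[OF assms] by (auto intro: transI)
  moreover have "omega_pow_less I lt \<subseteq> omega_pow_dom I \<times> omega_pow_dom I"
    by (auto elim: omega_pow_lessE)
  ultimately show ?thesis
    using omega_pow_less_irrefl omega_pow_less_total[OF assms]
    by (auto simp: is_linorder_def is_struc_def omega_pow_eq strict_linear_order_on_def
        irrefl_def total_on_def)
qed

lemma is_linorder_rev_order: "is_linorder A \<Longrightarrow> is_linorder (rev_order A)"
  by (auto simp: is_linorder_def is_struc_def rev_order_def strict_linear_order_on_def
      trans_def irrefl_def total_on_def)

lemma rev_order_rev_order [simp]: "rev_order (rev_order A) = A"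
  by (simp add: rev_order_def)

lemma iso_sym:
  assumes "iso A B"
  shows "iso B A"
proof -
  obtain f where f: "bij_betw f (fst A) (fst B)"
    and rel: "\<forall>x\<in>fst A. \<forall>y\<in>fst A. (x, y) \<in> snd A \<longleftrightarrow> (f x, f y) \<in> snd B"
    using assms unfolding iso_def by blast
  let ?g = "inv_into (fst A) f"
  have "\<And>x. x \<in> fst B \<Longrightarrow> ?g x \<in> fst A \<and> f (?g x) = x"
    using f by (auto simp: bij_betw_def inv_into_into f_inv_into_f)
  then have "\<forall>x\<in>fst B. \<forall>y\<in>fst B. (x, y) \<in> snd B \<longleftrightarrow> (?g x, ?g y) \<in> snd A"
    using rel by metis
  then show ?thesis using bij_betw_inv_into[OF f] unfolding iso_def by blast
qed

lemma iso_trans: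
  assumes "iso A B" "iso B C"
  shows "iso A C"
proof -
  obtain f where f: "bij_betw f (fst A) (fst B)"
    and f_rel: "\<forall>x\<in>fst A. \<forall>y\<in>fst A. (x, y) \<in> snd A \<longleftrightarrow> (f x, f y) \<in> snd B"
    using assms(1) unfolding iso_def by blast
  obtain g where g: "bij_betw g (fst B) (fst C)"
    and g_rel: "\<forall>x\<in>fst B. \<forall>y\<in>fst B. (x, y) \<in> snd B \<longleftrightarrow> (g x, g y) \<in> snd C"
    using assms(2) unfolding iso_def by blast
  have "\<forall>x\<in>fst A. \<forall>y\<in>fst A. (x, y) \<in> snd A \<longleftrightarrow> ((g \<circ> f) x, (g \<circ> f) y) \<in> snd C"
    using f_rel g_rel bij_betw_apply[OF f] by simp
  then show ?thesis using bij_betw_trans[OF f g] unfolding iso_def by blast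
qed

lemma iso_rev_order: "iso A B \<Longrightarrow> iso (rev_order A) (rev_order B)"
  unfolding iso_def rev_order_def by auto

lemma is_linorder_iso:
  assumes "iso A B" "is_struc A" "is_linorder B"
  shows "is_linorder A"
proof -
  obtain f where f: "bij_betw f (fst A) (fst B)"
    and rel: "\<forall>x\<in>fst A. \<forall>y\<in>fst A. (x, y) \<in> snd A \<longleftrightarrow> (f x, f y) \<in> snd B"
    using assms(1) unfolding iso_def by blast
  have dom: "snd A \<subseteq> fst A \<times> fst A" using assms(2) by (simp add: is_struc_def)
  have into: "\<And>x. x \<in> fst A \<Longrightarrow> f x \<in> fst B" and inj: "inj_on f (fst A)"
    using f by (auto simp: bij_betw_def)
  have "trans (snd A)"
  proof (rule transI)
    fix x y z assume xy: "(x, y) \<in> snd A" and yz: "(y, z) \<in> snd A"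
    then have xyz: "x \<in> fst A" "y \<in> fst A" "z \<in> fst A" using dom by auto
    then have "(f x, f y) \<in> snd B" "(f y, f z) \<in> snd B" using rel xy yz by auto
    then have "(f x, f z) \<in> snd B" using is_linorderD(2)[OF assms(3)] by (auto dest: transD)
    then show "(x, z) \<in> snd A" using rel xyz by auto
  qed
  moreover have "irrefl (snd A)"
    using dom rel is_linorderD(3)[OF assms(3)] by (auto simp: irrefl_def)
  moreover have "total_on (fst A) (snd A)"
  proof (rule total_onI)
    fix x y assume "x \<in> fst A" "y \<in> fst A" "x \<noteq> y"
    then have "(f x, f y) \<in> snd B \<or> (f y, f x) \<in> snd B"
      using into inj is_linorderD(4)[OF assms(3)] by (meson inj_on_contraD)
    then show "(x, y) \<in> snd A \<or> (y, x) \<in> snd A"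
      using rel \<open>x \<in> fst A\<close> \<open>y \<in> fst A\<close> by blast
  qed
  ultimately show ?thesis
    using assms(2) by (simp add: is_linorder_def strict_linear_order_on_def)
qed

lemma wf_iso:
  assumes "iso A B" "is_struc A" "wf (snd B)"
  shows "wf (snd A)"
proof -
  obtain f where "\<forall>x\<in>fst A. \<forall>y\<in>fst A. (x, y) \<in> snd A \<longleftrightarrow> (f x, f y) \<in> snd B"
    using assms(1) unfolding iso_def by blast
  then have "snd A \<subseteq> inv_image (snd B) f"
    using assms(2) by (auto simp: is_struc_def)
  then show ?thesis using wf_subset[OF wf_inv_image[OF assms(3)]] by blast
qed

text \<open>\<open>\<omega>\<^sup>I\<close> has a least element but no greatest one.\<close>

lemma omega_pow_not_iso_rev:
  assumes lin: "strict_linear_order_on I lt" and "I \<noteq> {}"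
  shows "\<not> iso (omega_pow I lt) (rev_order (omega_pow I lt))"
proof
  assume "iso (omega_pow I lt) (rev_order (omega_pow I lt))"
  then obtain \<phi> where bij: "bij_betw \<phi> (omega_pow_dom I) (omega_pow_dom I)"
    and anti: "\<forall>x\<in>omega_pow_dom I. \<forall>y\<in>omega_pow_dom I.
      (x, y) \<in> omega_pow_less I lt \<longleftrightarrow> (\<phi> y, \<phi> x) \<in> omega_pow_less I lt"
    unfolding iso_def omega_pow_eq rev_order_def by auto
  obtain i where "i \<in> I" using \<open>I \<noteq> {}\<close> by blast
  obtain a where a: "a \<in> omega_pow_dom I" "\<phi> a = (\<lambda>_. 0)"
    using bij zero_in_omega_pow_dom unfolding bij_betw_def by (metis imageE)
  define b where "b = a(i := Suc (a i))"
  have ab: "(a, b) \<in> omega_pow_less I lt"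
    unfolding b_def using omega_pow_less_increment[OF lin a(1) \<open>i \<in> I\<close>] .
  then have b: "b \<in> omega_pow_dom I" by (auto elim: omega_pow_lessE)
  have below_zero: "(\<phi> b, \<lambda>_. 0) \<in> omega_pow_less I lt"
    using anti a b ab by auto
  have "\<phi> b \<noteq> \<phi> a"
    using bij a(1) b ab omega_pow_less_irrefl unfolding bij_betw_def inj_on_def by metis
  moreover have "\<phi> b \<in> omega_pow_dom I" using bij b unfolding bij_betw_def by auto
  ultimately have "(\<lambda>_. 0, \<phi> b) \<in> omega_pow_less I lt"
    using omega_pow_less_zero[OF lin] a(2) by metis
  then show False
    using below_zero omega_pow_less_trans[OF lin] omega_pow_less_irrefl by metis
qed

section \<open>Well-orders embedding into each other are isomorphic\<close>

definition order_preserving :: "'a struc \<Rightarrow> 'b struc \<Rightarrow> ('a \<Rightarrow> 'b) \<Rightarrow> bool" where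
  "order_preserving A B f \<longleftrightarrow>
     (\<forall>x\<in>fst A. f x \<in> fst B) \<and> (\<forall>x y. (x, y) \<in> snd A \<longrightarrow> (f x, f y) \<in> snd B)"

definition nonstrict :: "'a struc \<Rightarrow> 'a rel" where
  "nonstrict A = snd A \<union> Id_on (fst A)"

lemma Field_nonstrict: "is_linorder A \<Longrightarrow> Field (nonstrict A) = fst A"
  using is_linorderD(1) unfolding nonstrict_def Field_def by fastforce

lemma Well_order_nonstrict:
  assumes "is_linorder A" "wf (snd A)"
  shows "Well_order (nonstrict A)"
proof -
  have "nonstrict A - Id = snd A"
    using is_linorderD(3)[OF assms(1)] unfolding nonstrict_def by auto
  moreover have "linear_order_on (fst A) (nonstrict A)"
    using is_linorderD[OF assms(1)] is_linorder_asym[OF assms(1)]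
    unfolding linear_order_on_def partial_order_on_def preorder_on_def refl_on_def
      trans_def antisym_def total_on_def nonstrict_def
    by blast
  ultimately show ?thesis
    using assms(2) Field_nonstrict[OF assms(1)] by (simp add: well_order_on_def)
qed

lemma compat_order_preserving:
  assumes "is_linorder A" "compat (nonstrict A) (nonstrict B) e" "inj_on e (fst A)"
    "e ` fst A \<subseteq> fst B"
  shows "order_preserving A B e"
proof -
  have "(e x, e y) \<in> snd B" if xy: "(x, y) \<in> snd A" for x y
  proof -
    have "x \<in> fst A" "y \<in> fst A" "x \<noteq> y"
      using xy is_linorderD(1,3)[OF assms(1)] by auto
    then have "e x \<noteq> e y" using assms(3) by (meson inj_on_contraD)
    moreover have "(e x, e y) \<in> nonstrict B"
      using assms(2) xy unfolding compat_def nonstrict_def by auto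
    ultimately show ?thesis unfolding nonstrict_def by auto
  qed
  then show ?thesis using assms(4) unfolding order_preserving_def by blast
qed

lemma order_preserving_comp:
  "order_preserving A B f \<Longrightarrow> order_preserving B C g \<Longrightarrow> order_preserving A C (g \<circ> f)"
  unfolding order_preserving_def by auto

lemma order_preserving_self_not_less:
  assumes "wf (snd A)" "order_preserving A A f" "x \<in> fst A"
  shows "(f x, x) \<notin> snd A"
proof
  let ?bad = "{x \<in> fst A. (f x, x) \<in> snd A}"
  assume "(f x, x) \<in> snd A"
  then have "x \<in> ?bad" using assms(3) by auto
  then obtain m where m: "m \<in> ?bad" and min: "\<And>y. (y, m) \<in> snd A \<Longrightarrow> y \<notin> ?bad"
    by (rule wfE_min[OF assms(1)]) blast
  have "f m \<in> ?bad"
    using m assms(2) unfolding order_preserving_def by auto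
  then show False using min m by auto
qed

text \<open>A strict initial segment of \<open>B\<close> cannot receive \<open>B\<close> order-preservingly, since that
  would push some element strictly below itself.\<close>

lemma not_ordLess_if_order_preserving:
  assumes A: "is_linorder A" "wf (snd A)" and B: "is_linorder B" "wf (snd B)"
    and g: "order_preserving B A g"
  shows "(nonstrict A, nonstrict B) \<notin> ordLess"
proof
  assume "(nonstrict A, nonstrict B) \<in> ordLess"
  then obtain e where "embedS (nonstrict A) (nonstrict B) e"
    unfolding ordLess_def by auto
  then have emb: "embed (nonstrict A) (nonstrict B) e" and not_bij: "\<not> bij_betw e (fst A) (fst B)"
    unfolding embedS_def Field_nonstrict[OF A(1)] Field_nonstrict[OF B(1)] by auto
  note WA = Well_order_nonstrict[OF A] and WB = Well_order_nonstrict[OF B]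
  have cmp: "compat (nonstrict A) (nonstrict B) e" and inj: "inj_on e (fst A)"
    and ofilter: "wo_rel.ofilter (nonstrict B) (e ` fst A)"
    using emb embed_iff_compat_inj_on_ofilter[OF WA WB] Field_nonstrict[OF A(1)] by auto
  have sub: "e ` fst A \<subseteq> fst B"
    and down: "\<And>a. a \<in> e ` fst A \<Longrightarrow> under (nonstrict B) a \<subseteq> e ` fst A"
    using ofilter Field_nonstrict[OF B(1)]
    unfolding wo_rel.ofilter_def[OF wo_rel.intro[OF WB]] by auto
  obtain b where b: "b \<in> fst B" "b \<notin> e ` fst A"
    using sub not_bij inj unfolding bij_betw_def by blast
  have above: "(e a, b) \<in> snd B" if a: "a \<in> fst A" for a
  proof -
    have "(b, e a) \<notin> snd B"
      using down[of "e a"] a b(2) unfolding under_def nonstrict_def by auto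
    moreover have "e a \<noteq> b" using a b(2) by auto
    ultimately show ?thesis using is_linorderD(4)[OF B(1)] sub a b(1) by blast
  qed
  have "order_preserving B B (e \<circ> g)"
    using order_preserving_comp[OF g compat_order_preserving[OF A(1) cmp inj sub]] .
  moreover have "((e \<circ> g) b, b) \<in> snd B"
    using above g b(1) unfolding order_preserving_def by auto
  ultimately show False using order_preserving_self_not_less[OF B(2) _ b(1)] by blast
qed

lemma iso_if_order_preserving_both_ways:
  assumes A: "is_linorder A" "wf (snd A)" and B: "is_linorder B" "wf (snd B)"
    and "order_preserving A B f" "order_preserving B A g"
  shows "iso A B"
proof -
  note WA = Well_order_nonstrict[OF A] and WB = Well_order_nonstrict[OF B]
  have "(nonstrict A, nonstrict B) \<notin> ordLess" "(nonstrict B, nonstrict A) \<notin> ordLess"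
    using not_ordLess_if_order_preserving assms by blast+
  then have "(nonstrict B, nonstrict A) \<in> ordIso"
    using ordLess_or_ordLeq[OF WA WB] ordLeq_iff_ordLess_or_ordIso by blast
  then obtain h where "BNF_Wellorder_Embedding.iso (nonstrict B) (nonstrict A) h"
    unfolding ordIso_def by auto
  then have bij: "bij_betw h (fst B) (fst A)" and cmp: "compat (nonstrict B) (nonstrict A) h"
    using embed_iff_compat_inj_on_ofilter[OF WB WA]
    unfolding BNF_Wellorder_Embedding.iso_def Field_nonstrict[OF A(1)] Field_nonstrict[OF B(1)]
    by auto
  have h: "order_preserving B A h"
    using compat_order_preserving[OF B(1) cmp] bij unfolding bij_betw_def by auto
  have "(x, y) \<in> snd B \<longleftrightarrow> (h x, h y) \<in> snd A" if "x \<in> fst B" "y \<in> fst B" for x y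
  proof
    assume hxy: "(h x, h y) \<in> snd A"
    show "(x, y) \<in> snd B"
    proof (rule ccontr)
      assume "(x, y) \<notin> snd B"
      then have "x = y \<or> (y, x) \<in> snd B" using is_linorderD(4)[OF B(1)] that by blast
      then show False
        using hxy h is_linorderD(3)[OF A(1)] is_linorder_asym[OF A(1)]
        unfolding order_preserving_def by blast
    qed
  qed (use h in \<open>auto simp: order_preserving_def\<close>)
  then show ?thesis using bij iso_sym unfolding iso_def by blast
qed

section \<open>Lexicographically ordered headed lists\<close>

definition hlists :: "nat set \<Rightarrow> nat list set" where
  "hlists V = {s. s \<noteq> [] \<and> length s = Suc (hd s) \<and> set s \<subseteq> V}"

definition lex_less :: "'a rel \<Rightarrow> 'a list \<Rightarrow> 'a list \<Rightarrow> bool" where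
  "lex_less R s t \<longleftrightarrow>
     (\<exists>i. i < length s \<and> i < length t \<and> take i s = take i t \<and> (s ! i, t ! i) \<in> R)"

definition hlist_order :: "nat struc \<Rightarrow> nat list struc" where
  "hlist_order A = (hlists (fst A),
     {(s, t). s \<in> hlists (fst A) \<and> t \<in> hlists (fst A) \<and> lex_less (snd A) s t})"

lemma hlistsE:
  assumes "s \<in> hlists V"
  obtains a xs where "s = a # xs" "length xs = a" "a \<in> V" "set xs \<subseteq> V"
  using assms by (cases s) (auto simp: hlists_def)

lemma lex_less_converse: "lex_less (R\<inverse>) s t \<longleftrightarrow> lex_less R t s"
  unfolding lex_less_def by (auto simp: eq_commute)

lemma lex_less_irrefl: "irrefl R \<Longrightarrow> \<not> lex_less R s s"
  unfolding lex_less_def irrefl_def by auto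

lemma lex_less_trans:
  assumes "trans R" "lex_less R s t" "lex_less R t u"
  shows "lex_less R s u"
proof -
  obtain i where i: "i < length s" "i < length t" "take i s = take i t" "(s ! i, t ! i) \<in> R"
    using assms(2) unfolding lex_less_def by blast
  obtain j where j: "j < length t" "j < length u" "take j t = take j u" "(t ! j, u ! j) \<in> R"
    using assms(3) unfolding lex_less_def by blast
  consider "i < j" | "i = j" | "j < i" by arith
  then show ?thesis
  proof cases
    case 1
    then have "take i t = take i u" "t ! i = u ! i"
      using j(3) by (metis min.strict_order_iff take_take, metis nth_take)
    then show ?thesis unfolding lex_less_def using i j 1 by (intro exI[of _ i]) auto
  next
    case 2
    then show ?thesis
      unfolding lex_less_def using i j assms(1) by (intro exI[of _ i]) (auto dest: transD)
  next
    case 3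
    then have "take j s = take j t" "s ! j = t ! j"
      using i(3) by (metis min.strict_order_iff take_take, metis nth_take)
    then show ?thesis unfolding lex_less_def using i j 3 by (intro exI[of _ j]) auto
  qed
qed

lemma first_difference:
  "length s = length t \<Longrightarrow> s \<noteq> t \<Longrightarrow> \<exists>i<length s. take i s = take i t \<and> s ! i \<noteq> t ! i"
proof (induction s arbitrary: t)
  case (Cons a s)
  then obtain b t' where t: "t = b # t'" by (cases t) auto
  show ?case
  proof (cases "a = b")
    case True
    then obtain i where "i < length s" "take i s = take i t'" "s ! i \<noteq> t' ! i"
      using Cons t by auto
    then show ?thesis using True t by (intro exI[of _ "Suc i"]) auto
  qed (use t in auto)
qed simp

lemma hlists_first_difference:
  assumes "s \<in> hlists V" "t \<in> hlists V" "s \<noteq> t"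
  shows "\<exists>i. i < length s \<and> i < length t \<and> take i s = take i t \<and> s ! i \<noteq> t ! i"
proof (cases "hd s = hd t")
  case True
  then have "length s = length t" using assms by (simp add: hlists_def)
  then show ?thesis using first_difference assms(3) by metis
next
  case False
  then show ?thesis using assms by (intro exI[of _ 0]) (auto simp: hlists_def hd_conv_nth)
qed

lemma not_lex_less_iff:
  assumes "is_linorder A" "s \<in> hlists (fst A)" "t \<in> hlists (fst A)"
  shows "\<not> lex_less (snd A) s t \<longleftrightarrow> s = t \<or> (\<exists>i. i < length s \<and> i < length t \<and>
     take i s = take i t \<and> s ! i \<noteq> t ! i \<and> (s ! i, t ! i) \<notin> snd A)"
proof -
  have irrefl: "irrefl (snd A)" using is_linorderD(3)[OF assms(1)] by (simp add: irrefl_def)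
  have "\<not> lex_less (snd A) s t"
    if i: "i < length s" "i < length t" "take i s = take i t" "s ! i \<noteq> t ! i"
      "(s ! i, t ! i) \<notin> snd A" for i
  proof
    assume "lex_less (snd A) s t"
    then obtain j where j: "j < length s" "j < length t" "take j s = take j t"
      "(s ! j, t ! j) \<in> snd A" unfolding lex_less_def by blast
    consider "j < i" | "j = i" | "i < j" by arith
    then show False
    proof cases
      case 1
      then have "s ! j = t ! j" using i(3) by (metis nth_take)
      then show False using j(4) irrefl by (auto simp: irrefl_def)
    next
      case 3
      then have "s ! i = t ! i" using j(3) by (metis nth_take)
      then show False using i(4) by simp
    qed (use i j in simp)
  qed
  then show ?thesis
    using hlists_first_difference[OF assms(2,3)] lex_less_irrefl[OF irrefl]
    unfolding lex_less_def by blast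
qed

lemma is_linorder_hlist_order:
  assumes "is_linorder A"
  shows "is_linorder (hlist_order A)"
proof -
  have "trans (snd (hlist_order A))"
    using lex_less_trans[OF is_linorderD(2)[OF assms]]
    unfolding hlist_order_def by (auto intro: transI)
  moreover have "irrefl (snd (hlist_order A))"
    using lex_less_irrefl is_linorderD(3)[OF assms]
    unfolding hlist_order_def by (auto simp: irrefl_def)
  moreover have "total_on (fst (hlist_order A)) (snd (hlist_order A))"
  proof (rule total_onI)
    fix s t assume "s \<in> fst (hlist_order A)" "t \<in> fst (hlist_order A)" "s \<noteq> t"
    then have st: "s \<in> hlists (fst A)" "t \<in> hlists (fst A)" "s \<noteq> t"
      by (auto simp: hlist_order_def)
    then obtain i where i: "i < length s" "i < length t" "take i s = take i t" "s ! i \<noteq> t ! i"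
      using hlists_first_difference by blast
    then have "s ! i \<in> fst A" "t ! i \<in> fst A" using st by (auto simp: hlists_def)
    then have "(s ! i, t ! i) \<in> snd A \<or> (t ! i, s ! i) \<in> snd A"
      using is_linorderD(4)[OF assms] i(4) by blast
    then show "(s, t) \<in> snd (hlist_order A) \<or> (t, s) \<in> snd (hlist_order A)"
      unfolding hlist_order_def lex_less_def using st i by auto
  qed
  ultimately show ?thesis
    by (auto simp: is_linorder_def is_struc_def strict_linear_order_on_def hlist_order_def)
qed

lemma hlist_order_imp_lex_prod:
  assumes "(s, t) \<in> snd (hlist_order A)"
  shows "((hd s, tl s), (hd t, tl t)) \<in> snd A <*lex*> lex (snd A)"
proof -
  obtain i where i: "i < length s" "i < length t" "take i s = take i t" "(s ! i, t ! i) \<in> snd A"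
    using assms unfolding hlist_order_def lex_less_def by auto
  obtain a xs b ys where s: "s = a # xs" "length xs = a" and t: "t = b # ys" "length ys = b"
    using assms by (auto simp: hlist_order_def elim!: hlistsE)
  show ?thesis
  proof (cases i)
    case 0
    then show ?thesis using i s t by simp
  next
    case (Suc k)
    then have "a = b" "take k xs = take k ys" "k < length xs" "(xs ! k, ys ! k) \<in> snd A"
      using i s t by auto
    moreover have "xs = take k xs @ xs ! k # drop (Suc k) xs"
      "ys = take k ys @ ys ! k # drop (Suc k) ys"
      using id_take_nth_drop[of k xs] id_take_nth_drop[of k ys] \<open>k < length xs\<close> \<open>a = b\<close> s t
      by auto
    ultimately have "(xs, ys) \<in> lex (snd A)"
      unfolding lex_conv using s t by (metis (mono_tags, lifting) case_prodI mem_Collect_eq)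
    then show ?thesis using s t \<open>a = b\<close> by simp
  qed
qed

lemma wf_hlist_order:
  assumes "wf (snd A)"
  shows "wf (snd (hlist_order A))"
proof (rule wf_subset)
  show "wf (inv_image (snd A <*lex*> lex (snd A)) (\<lambda>s. (hd s, tl s)))"
    using assms by (intro wf_inv_image wf_lex_prod wf_lex)
  show "snd (hlist_order A) \<subseteq> inv_image (snd A <*lex*> lex (snd A)) (\<lambda>s. (hd s, tl s))"
    using hlist_order_imp_lex_prod[of _ _ A] unfolding inv_image_def by blast
qed

section \<open>The headed-list order over \<open>\<omega>\<^sup>n\<^sup>+\<^sup>1\<close> is \<open>\<omega>\<^sup>\<omega>\<^sup>+\<^sup>n\<close>\<close>

abbreviation omega_plus_index :: "nat \<Rightarrow> (nat + nat) set" where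
  "omega_plus_index n \<equiv> range Inl \<union> Inr ` {..<n}"

lemma omega_pow_nat_Suc_eq:
  "omega_pow_nat (Suc n) = (omega_pow_dom {..n}, omega_pow_less {..n} nat_less)"
  by (simp add: omega_pow_nat_def omega_pow_eq lessThan_Suc_atMost)

lemma omega_pow_omega_plus_eq:
  "omega_pow_omega_plus n =
     (omega_pow_dom (omega_plus_index n), omega_pow_less (omega_plus_index n) omega_plus_lt)"
  by (simp add: omega_pow_omega_plus_def omega_pow_eq)

lemma omega_plus_lt_simps [simp]:
  "(Inl a, Inl b) \<in> omega_plus_lt \<longleftrightarrow> a < b"
  "(Inr a, Inr b) \<in> omega_plus_lt \<longleftrightarrow> a < b"
  "(Inl a, Inr b) \<in> omega_plus_lt"
  "(Inr a, Inl b) \<notin> omega_plus_lt"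
  by (auto simp: omega_plus_lt_def)

lemma omega_pow_dom_vanishes:
  fixes n :: nat
  assumes "x \<in> omega_pow_dom {..n}" "n < i"
  shows "x i = 0"
proof (rule ccontr)
  assume "x i \<noteq> 0"
  then have "i \<in> {..n}" using assms(1) unfolding omega_pow_dom_def by blast
  then show False using assms(2) by simp
qed

lemma omega_pow_less_atMostE:
  fixes n :: nat
  assumes "(x, y) \<in> omega_pow_less {..n} nat_less"
  obtains r where "r \<le> n" "x r < y r" "\<And>j. r < j \<Longrightarrow> x j = y j"
proof -
  obtain r where r: "r \<le> n" "x r < y r" and above: "\<And>j. j \<le> n \<Longrightarrow> r < j \<Longrightarrow> x j = y j"
    and dom: "x \<in> omega_pow_dom {..n}" "y \<in> omega_pow_dom {..n}"
    using assms by (elim omega_pow_lessE) auto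
  have "x j = y j" if "r < j" for j
  proof (cases "j \<le> n")
    case False
    then show ?thesis using omega_pow_dom_vanishes dom by (metis not_le)
  qed (use above that in blast)
  then show ?thesis using that r by blast
qed

lemma inj_nat_unbounded:
  assumes "inj (f :: nat \<Rightarrow> nat)"
  obtains p where "d \<le> f p"
proof -
  have "\<not> f ` {..d} \<subseteq> {..<d}"
  proof
    assume "f ` {..d} \<subseteq> {..<d}"
    then have "card (f ` {..d}) \<le> d" using card_mono[of "{..<d}"] by fastforce
    moreover have "card (f ` {..d}) = Suc d"
      using assms by (simp add: card_image inj_on_subset)
    ultimately show False by simp
  qed
  then obtain p where "\<not> f p < d" by auto
  then show ?thesis using that[of p] by simp
qed

lemma div_mod_block:
  fixes K r n :: nat
  assumes "r \<le> n"
  shows "(K * Suc n + r) div Suc n = K" "(K * Suc n + r) mod Suc n = r"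
proof -
  have "(r + K * Suc n) div Suc n = K + r div Suc n" "(r + K * Suc n) mod Suc n = r mod Suc n"
    by (rule div_mult_self1, simp, rule mod_mult_self1)
  then show "(K * Suc n + r) div Suc n = K" "(K * Suc n + r) mod Suc n = r"
    using assms by (simp_all add: add.commute)
qed

lemma block_less:
  fixes L q r n :: nat
  assumes "q < L" "r \<le> n"
  shows "(L - Suc q) * Suc n + r < Suc n * L"
proof -
  have "(L - Suc q) * Suc n + r < Suc (L - Suc q) * Suc n" using assms(2) by simp
  also have "Suc (L - Suc q) = L - q" using assms(1) by simp
  also have "(L - q) * Suc n \<le> Suc n * L" by (metis diff_le_self mult.commute mult_le_mono1)
  finally show ?thesis .
qed

locale omega_pow_copy =
  fixes n :: nat and A :: "nat struc" and h :: "(nat \<Rightarrow> nat) \<Rightarrow> nat"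
  assumes struc: "is_struc A"
    and h_bij: "bij_betw h (omega_pow_dom {..n}) (fst A)"
    and h_less_iff: "\<And>x y. x \<in> omega_pow_dom {..n} \<Longrightarrow> y \<in> omega_pow_dom {..n} \<Longrightarrow>
      (x, y) \<in> omega_pow_less {..n} nat_less \<longleftrightarrow> (h x, h y) \<in> snd A"
begin

lemma iso_A: "iso A (omega_pow_nat (Suc n))"
proof (rule iso_sym)
  show "iso (omega_pow_nat (Suc n)) A"
    using h_bij h_less_iff unfolding iso_def omega_pow_nat_Suc_eq by auto
qed

lemma linorder_A: "is_linorder A"
  using is_linorder_iso[OF iso_A struc] is_linorder_omega_pow strict_linear_order_on_nat_less
  unfolding omega_pow_nat_def by blast

lemma wf_A: "wf (snd A)"
  using wf_iso[OF iso_A struc] wf_omega_pow_less_nat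
  unfolding omega_pow_nat_def omega_pow_eq by simp

lemma h_in: "x \<in> omega_pow_dom {..n} \<Longrightarrow> h x \<in> fst A"
  using h_bij by (auto simp: bij_betw_def)

lemma h_mono: "(x, y) \<in> omega_pow_less {..n} nat_less \<Longrightarrow> (h x, h y) \<in> snd A"
  using h_less_iff by (auto elim: omega_pow_lessE)

definition h_inv :: "nat \<Rightarrow> nat \<Rightarrow> nat" where
  "h_inv = inv_into (omega_pow_dom {..n}) h"

lemma h_inv_in: "a \<in> fst A \<Longrightarrow> h_inv a \<in> omega_pow_dom {..n}"
  unfolding h_inv_def using h_bij by (auto simp: bij_betw_def inv_into_into)

lemma h_h_inv: "a \<in> fst A \<Longrightarrow> h (h_inv a) = a"
  unfolding h_inv_def using h_bij by (auto simp: bij_betw_def f_inv_into_f)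

lemma h_inv_mono:
  assumes "(a, b) \<in> snd A"
  shows "(h_inv a, h_inv b) \<in> omega_pow_less {..n} nat_less"
proof -
  have "a \<in> fst A" "b \<in> fst A" using assms struc by (auto simp: is_struc_def)
  then show ?thesis using assms h_less_iff[OF h_inv_in h_inv_in] h_h_inv by simp
qed

subsection \<open>Embedding \<open>\<omega>\<^sup>\<omega>\<^sup>+\<^sup>n\<close> into the headed lists\<close>

text \<open>Write \<open>g \<in> \<omega>\<^sup>\<omega>\<^sup>+\<^sup>n\<close> as \<open>\<omega>\<^sup>\<omega> \<beta> + \<gamma>\<close> with \<open>\<beta> < \<omega>\<^sup>n\<close> and \<open>\<gamma> < \<omega>\<^sup>\<omega>\<close>. The head of its image is
  (the label of) \<open>\<omega> \<beta> + p\<close>, with \<open>p\<close> least such that the head is at least the degree bound of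
  \<open>\<gamma>\<close>; the tail lists the coefficients of \<open>\<gamma>\<close> from the top down, as labels of finite
  ordinals.\<close>

definition top_part :: "(nat + nat \<Rightarrow> nat) \<Rightarrow> nat \<Rightarrow> nat \<Rightarrow> nat" where
  "top_part g p = (\<lambda>i. if i = 0 then p else if i \<le> n then g (Inr (i - 1)) else 0)"

definition finite_ordinal :: "nat \<Rightarrow> nat \<Rightarrow> nat" where
  "finite_ordinal c = (\<lambda>i. if i = 0 then c else 0)"

definition degree_bound :: "(nat + nat \<Rightarrow> nat) \<Rightarrow> nat" where
  "degree_bound g = (LEAST d. \<forall>j\<ge>d. g (Inl j) = 0)"

definition head_offset :: "(nat + nat \<Rightarrow> nat) \<Rightarrow> nat" where
  "head_offset g = (LEAST p. degree_bound g \<le> h (top_part g p))"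

abbreviation head_of :: "(nat + nat \<Rightarrow> nat) \<Rightarrow> nat" where
  "head_of g \<equiv> h (top_part g (head_offset g))"

definition to_hlist :: "(nat + nat \<Rightarrow> nat) \<Rightarrow> nat list" where
  "to_hlist g = head_of g # map (\<lambda>j. h (finite_ordinal (g (Inl j)))) (rev [0..<head_of g])"

lemma top_part_in: "top_part g p \<in> omega_pow_dom {..n}"
proof -
  have "{i. top_part g p i \<noteq> 0} \<subseteq> {..n}" by (auto simp: top_part_def split: if_splits)
  then show ?thesis unfolding omega_pow_dom_def by (auto intro: finite_subset)
qed

lemma finite_ordinal_in: "finite_ordinal c \<in> omega_pow_dom {..n}"
proof -
  have "{i. finite_ordinal c i \<noteq> 0} \<subseteq> {0}" by (auto simp: finite_ordinal_def split: if_splits)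
  then show ?thesis unfolding omega_pow_dom_def by (auto intro: finite_subset)
qed

lemma degree_bound:
  assumes "g \<in> omega_pow_dom (omega_plus_index n)" "degree_bound g \<le> j"
  shows "g (Inl j) = 0"
proof -
  have "finite (Inl -` {i. g i \<noteq> 0})"
    using assms(1) by (intro finite_vimageI) (auto simp: omega_pow_dom_def)
  then obtain B where "\<forall>j\<in>Inl -` {i. g i \<noteq> 0}. j < B"
    using finite_nat_set_iff_bounded by blast
  then have "\<forall>j\<ge>B. g (Inl j) = 0" by force
  then have "\<forall>j\<ge>degree_bound g. g (Inl j) = 0" unfolding degree_bound_def by (rule LeastI)
  then show ?thesis using assms(2) by blast
qed

lemma degree_bound_le: "(\<And>j. d \<le> j \<Longrightarrow> g (Inl j) = 0) \<Longrightarrow> degree_bound g \<le> d"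
  unfolding degree_bound_def by (rule Least_le) blast

lemma degree_bound_le_head: "degree_bound g \<le> head_of g"
proof -
  have "inj (\<lambda>p. h (top_part g p))"
  proof (rule injI)
    fix p q assume "h (top_part g p) = h (top_part g q)"
    then have "top_part g p = top_part g q"
      using h_bij top_part_in unfolding bij_betw_def inj_on_def by blast
    then show "p = q" by (metis top_part_def)
  qed
  then obtain p where "degree_bound g \<le> h (top_part g p)" by (rule inj_nat_unbounded)
  then show ?thesis unfolding head_offset_def by (rule LeastI)
qed

lemma head_offset_le: "degree_bound g \<le> h (top_part g p) \<Longrightarrow> head_offset g \<le> p"
  unfolding head_offset_def by (rule Least_le)

lemma to_hlist_in: "to_hlist g \<in> hlists (fst A)"
  unfolding to_hlist_def hlists_def using h_in top_part_in finite_ordinal_in by auto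

lemma finite_ordinal_less:
  "c < c' \<Longrightarrow> (finite_ordinal c, finite_ordinal c') \<in> omega_pow_less {..n} nat_less"
  by (rule omega_pow_lessI[OF finite_ordinal_in finite_ordinal_in, where i = 0])
    (auto simp: finite_ordinal_def)

lemma top_part_less:
  "p < q \<Longrightarrow> (top_part g p, top_part g q) \<in> omega_pow_less {..n} nat_less"
  by (rule omega_pow_lessI[OF top_part_in top_part_in, where i = 0]) (auto simp: top_part_def)

lemma to_hlist_less_if_head_less:
  assumes "(top_part g (head_offset g), top_part g' (head_offset g')) \<in> omega_pow_less {..n} nat_less"
  shows "(to_hlist g, to_hlist g') \<in> snd (hlist_order A)"
  using h_mono[OF assms] to_hlist_in unfolding hlist_order_def lex_less_def
  by (auto intro!: exI[of _ 0] simp: to_hlist_def)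

lemma to_hlist_less_if_tail_less:
  assumes same_head: "top_part g (head_offset g) = top_part g' (head_offset g')"
    and j0: "j0 < head_of g" "g (Inl j0) < g' (Inl j0)"
    and above: "\<And>j. j0 < j \<Longrightarrow> g (Inl j) = g' (Inl j)"
  shows "(to_hlist g, to_hlist g') \<in> snd (hlist_order A)"
proof -
  define m where "m = head_of g"
  define tail :: "(nat + nat \<Rightarrow> nat) \<Rightarrow> nat list"
    where "tail f = map (\<lambda>j. h (finite_ordinal (f (Inl j)))) (rev [0..<m])" for f
  have lists: "to_hlist g = m # tail g" "to_hlist g' = m # tail g'"
    using same_head by (simp_all add: to_hlist_def m_def tail_def)
  have nth_tail: "tail f ! k = h (finite_ordinal (f (Inl (m - Suc k))))" if "k < m" for f k
    using that by (simp add: tail_def rev_nth)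
  define i where "i = m - Suc j0"
  have i: "i < m" "m - Suc i = j0" using j0(1) by (auto simp: m_def i_def)
  have "take i (tail g) = take i (tail g')"
  proof (rule nth_equalityI)
    fix k assume "k < length (take i (tail g))"
    then have "k < i" "j0 < m - Suc k" using i by (auto simp: tail_def)
    then show "take i (tail g) ! k = take i (tail g') ! k"
      using nth_tail above i(1) by simp
  qed (simp add: tail_def)
  moreover have "(tail g ! i, tail g' ! i) \<in> snd A"
    using nth_tail[OF i(1)] i(2) h_mono[OF finite_ordinal_less[OF j0(2)]] by simp
  ultimately have "lex_less (snd A) (to_hlist g) (to_hlist g')"
    unfolding lists lex_less_def using i(1)
    by (intro exI[of _ "Suc i"]) (simp add: tail_def)
  then show ?thesis using to_hlist_in by (simp add: hlist_order_def)
qed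

lemma to_hlist_less_if_finite_part_less:
  assumes g': "g' \<in> omega_pow_dom (omega_plus_index n)" and same_top: "top_part g = top_part g'"
    and j0: "g (Inl j0) < g' (Inl j0)" and above: "\<And>j. j0 < j \<Longrightarrow> g (Inl j) = g' (Inl j)"
  shows "(to_hlist g, to_hlist g') \<in> snd (hlist_order A)"
proof -
  have "j0 < degree_bound g'"
    using degree_bound[OF g'] j0 by (metis not_less not_less0)
  then have "degree_bound g \<le> degree_bound g'"
    using above degree_bound[OF g'] by (intro degree_bound_le) auto
  then have "head_offset g \<le> head_offset g'"
    using degree_bound_le_head[of g'] same_top by (intro head_offset_le) simp
  then consider "head_offset g < head_offset g'" | "head_offset g = head_offset g'"
    by linarith
  then show ?thesis
  proof cases
    case 1
    then show ?thesis using top_part_less same_top by (metis to_hlist_less_if_head_less)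
  next
    case 2
    have "j0 < head_of g"
      using \<open>j0 < degree_bound g'\<close> degree_bound_le_head[of g'] same_top 2 by simp
    then show ?thesis using to_hlist_less_if_tail_less same_top 2 j0 above by simp
  qed
qed

lemma to_hlist_mono:
  assumes "(g, g') \<in> omega_pow_less (omega_plus_index n) omega_plus_lt"
  shows "(to_hlist g, to_hlist g') \<in> snd (hlist_order A)"
proof -
  obtain i0 where g': "g' \<in> omega_pow_dom (omega_plus_index n)"
    and i0: "i0 \<in> omega_plus_index n" "g i0 < g' i0"
    and above: "\<And>j. j \<in> omega_plus_index n \<Longrightarrow> (i0, j) \<in> omega_plus_lt \<Longrightarrow> g j = g' j"
    using assms by (elim omega_pow_lessE) blast
  show ?thesis
  proof (cases i0)
    case (Inr r0)
    have "(top_part g (head_offset g), top_part g' (head_offset g'))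
        \<in> omega_pow_less {..n} nat_less"
    proof (rule omega_pow_lessI[OF top_part_in top_part_in, where i = "Suc r0"])
      fix j assume "j \<in> {..n}" "(Suc r0, j) \<in> nat_less"
      then show "top_part g (head_offset g) j = top_part g' (head_offset g') j"
        using above[of "Inr (j - 1)"] Inr by (auto simp: top_part_def)
    qed (use i0 Inr in \<open>auto simp: top_part_def top_part_in\<close>)
    then show ?thesis by (rule to_hlist_less_if_head_less)
  next
    case (Inl j0)
    have "top_part g = top_part g'"
      using above Inl by (auto simp: top_part_def fun_eq_iff)
    then show ?thesis
      using to_hlist_less_if_finite_part_less[OF g'] i0(2) above Inl by auto
  qed
qed

subsection \<open>Embedding the headed lists into \<open>\<omega>\<^sup>\<omega>\<^sup>+\<^sup>n\<close>\<close>

text \<open>The list \<open>a # xs\<close> with \<open>xs = [x\<^sub>a\<^sub>-\<^sub>1, \<dots>, x\<^sub>0]\<close> is sent to the element whose coefficient of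
  \<open>\<omega>\<^sup>\<omega>\<^sup>+\<^sup>r\<close> is the coefficient of \<open>\<omega>\<^sup>r\<^sup>+\<^sup>1\<close> in \<open>h\<^sup>-\<^sup>1 a\<close>, and whose finite part stores the \<open>n + 1\<close>
  coefficients of \<open>h\<^sup>-\<^sup>1 x\<^sub>b\<close> in degrees \<open>(n + 1) b, \<dots>, (n + 1) b + n\<close>, topped by a single
  \<open>1\<close> in degree \<open>marker (h\<^sup>-\<^sup>1 a)\<close>. The marker lies above all these blocks and is increasing
  in the constant coefficient of \<open>h\<^sup>-\<^sup>1 a\<close>, which the infinite part does not record.\<close>

definition marker :: "(nat \<Rightarrow> nat) \<Rightarrow> nat" where
  "marker x = (\<Sum>p\<le>x 0. Suc (Suc n * h (x(0 := p))))"

definition block_digit :: "nat list \<Rightarrow> nat \<Rightarrow> nat" where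
  "block_digit xs j = (if j < Suc n * length xs
     then h_inv (xs ! (length xs - Suc (j div Suc n))) (j mod Suc n) else 0)"

definition from_hlist :: "nat list \<Rightarrow> nat + nat \<Rightarrow> nat" where
  "from_hlist s = (\<lambda>i. case i of
      Inr r \<Rightarrow> if r < n then h_inv (hd s) (Suc r) else 0
    | Inl j \<Rightarrow> if j = marker (h_inv (hd s)) then 1 else block_digit (tl s) j)"

lemma from_hlist_simps [simp]:
  "from_hlist (a # xs) (Inr r) = (if r < n then h_inv a (Suc r) else 0)"
  "from_hlist (a # xs) (Inl j) = (if j = marker (h_inv a) then 1 else block_digit xs j)"
  by (simp_all add: from_hlist_def)

lemma marker_above_blocks: "x \<in> omega_pow_dom {..n} \<Longrightarrow> Suc n * h x < marker x"
  unfolding marker_def using member_le_sum[of "x 0" "{..x 0}" "\<lambda>p. Suc (Suc n * h (x(0 := p)))"]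
  by simp

lemma marker_strict_mono:
  assumes "x 0 < x' 0" "\<And>i. i \<noteq> 0 \<Longrightarrow> x i = x' i"
  shows "marker x < marker x'"
proof -
  have "x(0 := p) = x'(0 := p)" for p using assms(2) by auto
  moreover have "(\<Sum>p\<le>a. Suc (f p)) < (\<Sum>p\<le>b. Suc (f p))" if "a < b" for a b and f :: "nat \<Rightarrow> nat"
    using that by (induction b) (auto simp: less_Suc_eq)
  ultimately show ?thesis unfolding marker_def using assms(1) by simp
qed

lemma block_digit_beyond: "Suc n * length xs \<le> j \<Longrightarrow> block_digit xs j = 0"
  by (simp add: block_digit_def)

lemma block_digit_at:
  assumes "q < length xs" "r \<le> n"
  shows "block_digit xs ((length xs - Suc q) * Suc n + r) = h_inv (xs ! q) r"
  unfolding block_digit_def div_mod_block[OF assms(2)]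
  using assms block_less[OF assms] by (simp add: Suc_diff_Suc)

lemma block_digit_eq_above:
  assumes len: "length xs' = length xs" and q: "q < length xs" "take q xs = take q xs'"
    and r: "r \<le> n" "\<And>r'. r < r' \<Longrightarrow> r' \<le> n \<Longrightarrow> h_inv (xs ! q) r' = h_inv (xs' ! q) r'"
    and j: "(length xs - Suc q) * Suc n + r < j"
  shows "block_digit xs j = block_digit xs' j"
proof (cases "j < Suc n * length xs")
  case True
  let ?b = "j div Suc n"
  have "((length xs - Suc q) * Suc n + r) div Suc n \<le> ?b" using j by (intro div_le_mono) simp
  then have b: "length xs - Suc q \<le> ?b" using div_mod_block(1)[OF r(1)] by simp
  have b_less: "?b < length xs" using True by (simp add: less_mult_imp_div_less mult.commute)
  have same_digit: "h_inv (xs ! (length xs - Suc ?b)) (j mod Suc n)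
      = h_inv (xs' ! (length xs - Suc ?b)) (j mod Suc n)"
  proof (cases "?b = length xs - Suc q")
    case True
    then have "(length xs - Suc q) * Suc n + j mod Suc n = j"
      using div_mult_mod_eq[of j "Suc n"] by simp
    then have "r < j mod Suc n" using j by linarith
    then show ?thesis using True q(1) r(2) by (simp add: Suc_diff_Suc)
  next
    case False
    then have "length xs - Suc ?b < q" using b b_less q(1) by linarith
    then show ?thesis using q(2) by (metis nth_take)
  qed
  show ?thesis using same_digit len by (simp add: block_digit_def)
qed (use len in \<open>simp add: block_digit_def\<close>)

lemma from_hlist_in:
  assumes "s \<in> hlists (fst A)"
  shows "from_hlist s \<in> omega_pow_dom (omega_plus_index n)"
proof -
  let ?B = "Suc (marker (h_inv (hd s)) + Suc n * length (tl s))"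
  have "{i. from_hlist s i \<noteq> 0} \<subseteq> Inl ` {..<?B} \<union> Inr ` {..<n}"
  proof
    fix i assume "i \<in> {i. from_hlist s i \<noteq> 0}"
    then show "i \<in> Inl ` {..<?B} \<union> Inr ` {..<n}"
      by (cases i) (auto simp: from_hlist_def block_digit_def split: if_splits)
  qed
  moreover have "finite (Inl ` {..<?B} \<union> Inr ` {..<n})" by simp
  moreover have "Inl ` {..<?B} \<union> Inr ` {..<n} \<subseteq> omega_plus_index n" by auto
  ultimately show ?thesis unfolding omega_pow_dom_def by (blast intro: finite_subset)
qed

lemma from_hlist_less_if_head_less:
  assumes s: "a # xs \<in> hlists (fst A)" and s': "a' # xs' \<in> hlists (fst A)"
    and less: "(a, a') \<in> snd A"
  shows "(from_hlist (a # xs), from_hlist (a' # xs')) \<in> omega_pow_less (omega_plus_index n) omega_plus_lt"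
proof -
  define x x' where "x = h_inv a" and "x' = h_inv a'"
  have dom: "x \<in> omega_pow_dom {..n}" "x' \<in> omega_pow_dom {..n}"
    and len: "length xs = h x" "length xs' = h x'"
    using s s' h_inv_in h_h_inv by (auto simp: x_def x'_def hlists_def)
  obtain r0 where r0: "r0 \<le> n" "x r0 < x' r0" and above: "\<And>j. r0 < j \<Longrightarrow> x j = x' j"
    using h_inv_mono[OF less] unfolding x_def x'_def by (rule omega_pow_less_atMostE) blast
  note in_dom = from_hlist_in[OF s] from_hlist_in[OF s']
  show ?thesis
  proof (cases r0)
    case (Suc r)
    show ?thesis
    proof (rule omega_pow_lessI[OF in_dom, where i = "Inr r"])
      fix j assume "j \<in> omega_plus_index n" "(Inr r, j) \<in> omega_plus_lt"
      then show "from_hlist (a # xs) j = from_hlist (a' # xs') j"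
        using above Suc by (auto simp: x_def x'_def)
    qed (use r0 Suc in \<open>auto simp: x_def x'_def\<close>)
  next
    case 0
    have same: "\<And>i. i \<noteq> 0 \<Longrightarrow> x i = x' i" using above 0 by simp
    have markers: "marker x < marker x'" using marker_strict_mono[OF _ same] r0 0 by simp
    have "Suc n * length xs < marker x'" "Suc n * length xs' < marker x'"
      using marker_above_blocks dom markers len by (metis order.strict_trans)+
    then show ?thesis
    proof (intro omega_pow_lessI[OF in_dom, where i = "Inl (marker x')"])
      fix j assume "j \<in> omega_plus_index n" "(Inl (marker x'), j) \<in> omega_plus_lt"
      then show "from_hlist (a # xs) j = from_hlist (a' # xs') j"
        using same markers \<open>Suc n * length xs < marker x'\<close> \<open>Suc n * length xs' < marker x'\<close>
        by (auto simp: x_def x'_def block_digit_beyond)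
    qed (use markers in \<open>auto simp: x_def x'_def block_digit_beyond\<close>)
  qed
qed

lemma from_hlist_less_if_tail_less:
  assumes s: "a # xs \<in> hlists (fst A)" and s': "a # xs' \<in> hlists (fst A)"
    and q: "q < length xs" "take q xs = take q xs'" and less: "(xs ! q, xs' ! q) \<in> snd A"
  shows "(from_hlist (a # xs), from_hlist (a # xs')) \<in> omega_pow_less (omega_plus_index n) omega_plus_lt"
proof -
  have len: "length xs' = length xs" "h (h_inv a) = length xs"
    using s s' h_h_inv by (auto simp: hlists_def)
  obtain r where r: "r \<le> n" "h_inv (xs ! q) r < h_inv (xs' ! q) r"
    and above: "\<And>r'. r < r' \<Longrightarrow> r' \<le> n \<Longrightarrow> h_inv (xs ! q) r' = h_inv (xs' ! q) r'"
    using h_inv_mono[OF less] by (elim omega_pow_lessE) auto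
  define j0 where "j0 = (length xs - Suc q) * Suc n + r"
  have "j0 < Suc n * length xs" unfolding j0_def using block_less[OF q(1) r(1)] .
  moreover have "a \<in> fst A" using s by (simp add: hlists_def)
  then have "Suc n * length xs < marker (h_inv a)"
    using marker_above_blocks[OF h_inv_in] len(2) by metis
  ultimately have j0_marker: "j0 < marker (h_inv a)" by (rule order.strict_trans)
  show ?thesis
  proof (rule omega_pow_lessI[OF from_hlist_in[OF s] from_hlist_in[OF s'], where i = "Inl j0"])
    show "from_hlist (a # xs) (Inl j0) < from_hlist (a # xs') (Inl j0)"
      using j0_marker block_digit_at[OF q(1) r(1)] block_digit_at[of q xs' r] q(1) r len(1)
      by (simp add: j0_def)
  next
    fix j assume "j \<in> omega_plus_index n" "(Inl j0, j) \<in> omega_plus_lt"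
    then show "from_hlist (a # xs) j = from_hlist (a # xs') j"
      using block_digit_eq_above[OF len(1) q r(1) above] by (auto simp: j0_def)
  qed simp
qed

lemma from_hlist_mono:
  assumes "(s, t) \<in> snd (hlist_order A)"
  shows "(from_hlist s, from_hlist t) \<in> omega_pow_less (omega_plus_index n) omega_plus_lt"
proof -
  have s: "s \<in> hlists (fst A)" and t: "t \<in> hlists (fst A)"
    and "lex_less (snd A) s t"
    using assms by (auto simp: hlist_order_def)
  then obtain i where i: "i < length s" "i < length t" "take i s = take i t"
    "(s ! i, t ! i) \<in> snd A" unfolding lex_less_def by blast
  obtain a xs b ys where st: "s = a # xs" "t = b # ys"
    using s t by (auto elim!: hlistsE)
  show ?thesis
  proof (cases i)
    case 0
    then show ?thesis using from_hlist_less_if_head_less s t st i(4) by simp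
  next
    case (Suc q)
    then show ?thesis using from_hlist_less_if_tail_less s t st i by simp
  qed
qed

theorem iso_hlist_order: "iso (hlist_order A) (omega_pow_omega_plus n)"
proof (rule iso_if_order_preserving_both_ways)
  show "is_linorder (hlist_order A)" by (rule is_linorder_hlist_order[OF linorder_A])
  show "wf (snd (hlist_order A))" by (rule wf_hlist_order[OF wf_A])
  show "is_linorder (omega_pow_omega_plus n)"
    unfolding omega_pow_omega_plus_def
    by (rule is_linorder_omega_pow[OF strict_linear_order_on_omega_plus_lt])
  show "order_preserving (hlist_order A) (omega_pow_omega_plus n) from_hlist"
    unfolding order_preserving_def omega_pow_omega_plus_eq
    using from_hlist_in from_hlist_mono by (simp add: hlist_order_def)
  show "order_preserving (omega_pow_omega_plus n) (hlist_order A) to_hlist"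
    unfolding order_preserving_def omega_pow_omega_plus_eq
    using to_hlist_in to_hlist_mono by (simp add: hlist_order_def)
  have "omega_pow_less (omega_plus_index n) omega_plus_lt \<subseteq> inv_image (snd (hlist_order A)) to_hlist"
    using to_hlist_mono by auto
  then show "wf (snd (omega_pow_omega_plus n))"
    unfolding omega_pow_omega_plus_eq
    using wf_subset[OF wf_inv_image[OF wf_hlist_order[OF wf_A]]] by simp
qed

end

section \<open>The enumeration operator\<close>

definition Phi :: "nat struc \<Rightarrow> nat struc" where
  "Phi A = (list_encode ` hlists (fst A),
     {(list_encode s, list_encode t) | s t.
        s \<in> hlists (fst A) \<and> t \<in> hlists (fst A) \<and> lex_less (snd A) s t})"

lemma is_struc_Phi: "is_struc (Phi A)"
  unfolding is_struc_def Phi_def by auto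

lemma in_fst_Phi: "e \<in> fst (Phi A) \<longleftrightarrow> list_decode e \<in> hlists (fst A)"
proof
  show "list_decode e \<in> hlists (fst A) \<Longrightarrow> e \<in> fst (Phi A)"
    unfolding Phi_def using list_decode_inverse[of e] by (metis fst_conv image_eqI)
qed (auto simp: Phi_def)

lemma in_snd_Phi: "(e, e') \<in> snd (Phi A) \<longleftrightarrow> list_decode e \<in> hlists (fst A) \<and>
    list_decode e' \<in> hlists (fst A) \<and> lex_less (snd A) (list_decode e) (list_decode e')"
proof
  assume "list_decode e \<in> hlists (fst A) \<and> list_decode e' \<in> hlists (fst A) \<and>
    lex_less (snd A) (list_decode e) (list_decode e')"
  then show "(e, e') \<in> snd (Phi A)"
    unfolding Phi_def snd_conv
    by (intro CollectI exI[of _ "list_decode e"] exI[of _ "list_decode e'"]) simp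
qed (auto simp: Phi_def)

lemma iso_hlist_order_Phi: "iso (hlist_order A) (Phi A)"
  unfolding iso_def
proof (intro exI[of _ list_encode] conjI)
  show "bij_betw list_encode (fst (hlist_order A)) (fst (Phi A))"
    unfolding hlist_order_def Phi_def by (simp add: bij_betw_def inj_on_def list_encode_eq)
qed (auto simp: hlist_order_def Phi_def list_encode_eq)

lemma Phi_rev_order: "Phi (rev_order A) = rev_order (Phi A)"
  unfolding Phi_def rev_order_def by (auto simp: lex_less_converse)

definition headed :: "nat list \<Rightarrow> bool" where
  "headed s \<longleftrightarrow> s \<noteq> [] \<and> length s = Suc (hd s)"

text \<open>A diagram contains \<open>Pos (AEq a a)\<close> exactly for the elements \<open>a\<close> of the domain.\<close>

definition elem_lits :: "nat \<Rightarrow> lit set" where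
  "elem_lits e = (\<lambda>a. Pos (AEq a a)) ` set (list_decode e)"

definition hlist_code :: "lit set \<Rightarrow> nat \<Rightarrow> bool" where
  "hlist_code X e \<longleftrightarrow> headed (list_decode e) \<and> elem_lits e \<subseteq> X"

fun gamma_accepts :: "lit set \<Rightarrow> lit \<Rightarrow> bool" where
  "gamma_accepts X (Pos (AEq e e')) \<longleftrightarrow> e = e' \<and> hlist_code X e"
| "gamma_accepts X (Neg (AEq e e')) \<longleftrightarrow> e \<noteq> e' \<and> hlist_code X e \<and> hlist_code X e'"
| "gamma_accepts X (Pos (ALess e e')) \<longleftrightarrow> hlist_code X e \<and> hlist_code X e' \<and>
     (\<exists>i. i < length (list_decode e) \<and> i < length (list_decode e') \<and>
        take i (list_decode e) = take i (list_decode e') \<and>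
        Pos (ALess (list_decode e ! i) (list_decode e' ! i)) \<in> X)"
| "gamma_accepts X (Neg (ALess e e')) \<longleftrightarrow> hlist_code X e \<and> hlist_code X e' \<and>
     (e = e' \<or> (\<exists>i. i < length (list_decode e) \<and> i < length (list_decode e') \<and>
        take i (list_decode e) = take i (list_decode e') \<and>
        list_decode e ! i \<noteq> list_decode e' ! i \<and>
        Neg (ALess (list_decode e ! i) (list_decode e' ! i)) \<in> X))"

definition Gamma :: "(lit list \<times> lit) set" where
  "Gamma = {(\<alpha>, \<phi>). gamma_accepts (set \<alpha>) \<phi>}"

lemma lit_cases:
  obtains (PosEq) e e' where "\<phi> = Pos (AEq e e')" | (NegEq) e e' where "\<phi> = Neg (AEq e e')"
    | (PosLess) e e' where "\<phi> = Pos (ALess e e')" | (NegLess) e e' where "\<phi> = Neg (ALess e e')"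
  by (metis atom.exhaust lit.exhaust)

lemma gamma_accepts_mono: "gamma_accepts X \<phi> \<Longrightarrow> X \<subseteq> Y \<Longrightarrow> gamma_accepts Y \<phi>"
  by (cases \<phi> rule: lit_cases) (auto simp: hlist_code_def)

text \<open>Acceptance of a literal about \<open>e, e'\<close> only depends on the literals of \<open>X\<close> that mention
  entries of the lists coded by \<open>e\<close> and \<open>e'\<close>.\<close>

definition relevant_lits :: "nat \<Rightarrow> nat \<Rightarrow> lit set" where
  "relevant_lits e e' = (let E = set (list_decode e) \<union> set (list_decode e') in
     (\<Union>a\<in>E. \<Union>b\<in>E. {Pos (AEq a b), Neg (AEq a b), Pos (ALess a b), Neg (ALess a b)}))"

lemma finite_relevant_lits: "finite (relevant_lits e e')"
  by (simp add: relevant_lits_def)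

lemma hlist_code_relevant_lits:
  assumes "hlist_code X c" "c = e \<or> c = e'"
  shows "hlist_code (X \<inter> relevant_lits e e') c"
  using assms by (auto simp: hlist_code_def elem_lits_def relevant_lits_def)

lemma less_lits_relevant:
  assumes "i < length (list_decode e)" "i < length (list_decode e')"
  shows "Pos (ALess (list_decode e ! i) (list_decode e' ! i)) \<in> relevant_lits e e'"
    "Neg (ALess (list_decode e ! i) (list_decode e' ! i)) \<in> relevant_lits e e'"
  using assms by (auto simp: relevant_lits_def)

lemma gamma_accepts_finite:
  assumes "gamma_accepts X \<phi>"
  obtains J where "finite J" "J \<subseteq> X" "gamma_accepts J \<phi>"
proof -
  have conclude: "thesis" if "gamma_accepts (X \<inter> relevant_lits e e') \<phi>" for e e'
    using that finite_relevant_lits \<open>\<And>J. finite J \<Longrightarrow> J \<subseteq> X \<Longrightarrow> gamma_accepts J \<phi> \<Longrightarrow> thesis\<close>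
    by (meson Int_lower1 finite_Int)
  note code = hlist_code_relevant_lits
  show ?thesis
  proof (cases \<phi> rule: lit_cases)
    case (PosEq e e')
    then show ?thesis using assms code[of X e e e'] by (intro conclude[of e e']) auto
  next
    case (NegEq e e')
    then show ?thesis using assms code[of X e e e'] code[of X e' e e'] by (intro conclude[of e e']) simp
  next
    case (PosLess e e')
    then show ?thesis using assms code[of X e e e'] code[of X e' e e'] less_lits_relevant(1)[of _ e e']
      by (intro conclude[of e e']) auto
  next
    case (NegLess e e')
    then show ?thesis using assms code[of X e e e'] code[of X e' e e'] less_lits_relevant(2)[of _ e e']
      by (intro conclude[of e e']) auto
  qed
qed

lemma apply_op_Gamma: "apply_op Gamma X = {\<phi>. gamma_accepts X \<phi>}"
proof (intro set_eqI iffI)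
  fix \<phi> assume "\<phi> \<in> apply_op Gamma X"
  then show "\<phi> \<in> {\<phi>. gamma_accepts X \<phi>}"
    using gamma_accepts_mono by (auto simp: apply_op_def Gamma_def)
next
  fix \<phi> assume "\<phi> \<in> {\<phi>. gamma_accepts X \<phi>}"
  then obtain J where "finite J" "J \<subseteq> X" "gamma_accepts J \<phi>"
    using gamma_accepts_finite by blast
  moreover obtain \<alpha> where "set \<alpha> = J" using finite_list[OF \<open>finite J\<close>] by blast
  ultimately show "\<phi> \<in> apply_op Gamma X" by (auto simp: apply_op_def Gamma_def)
qed

lemma diag_iff:
  assumes "is_struc A"
  shows "Pos (AEq a b) \<in> diag A \<longleftrightarrow> a = b \<and> a \<in> fst A"
    "Neg (AEq a b) \<in> diag A \<longleftrightarrow> a \<in> fst A \<and> b \<in> fst A \<and> a \<noteq> b"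
    "Pos (ALess a b) \<in> diag A \<longleftrightarrow> a \<in> fst A \<and> b \<in> fst A \<and> (a, b) \<in> snd A"
    "Neg (ALess a b) \<in> diag A \<longleftrightarrow> a \<in> fst A \<and> b \<in> fst A \<and> (a, b) \<notin> snd A"
  using assms unfolding diag_def is_struc_def by auto

lemma hlist_code_diag:
  assumes "is_struc A"
  shows "hlist_code (diag A) e \<longleftrightarrow> list_decode e \<in> hlists (fst A)"
proof -
  have "elem_lits e \<subseteq> diag A \<longleftrightarrow> set (list_decode e) \<subseteq> fst A"
    using diag_iff(1)[OF assms] by (auto simp: elem_lits_def)
  then show ?thesis by (simp add: hlist_code_def hlists_def headed_def)
qed

lemma lex_less_diag:
  assumes "is_struc A" "set s \<subseteq> fst A" "set t \<subseteq> fst A"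
  shows "lex_less (snd A) s t \<longleftrightarrow> (\<exists>i. i < length s \<and> i < length t \<and> take i s = take i t \<and>
      Pos (ALess (s ! i) (t ! i)) \<in> diag A)"
  unfolding lex_less_def diag_iff(3)[OF assms(1)] using assms(2,3) by (auto dest: nth_mem)

lemma not_less_diag:
  assumes "is_struc A" "set s \<subseteq> fst A" "set t \<subseteq> fst A"
  shows "(\<exists>i. i < length s \<and> i < length t \<and> take i s = take i t \<and> s ! i \<noteq> t ! i \<and>
      (s ! i, t ! i) \<notin> snd A) \<longleftrightarrow> (\<exists>i. i < length s \<and> i < length t \<and> take i s = take i t \<and>
      s ! i \<noteq> t ! i \<and> Neg (ALess (s ! i) (t ! i)) \<in> diag A)"
  unfolding diag_iff(4)[OF assms(1)] using assms(2,3) by (auto dest: nth_mem)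

theorem apply_op_Gamma_diag:
  assumes lin: "is_linorder A"
  shows "apply_op Gamma (diag A) = diag (Phi A)"
proof -
  have A: "is_struc A" using lin by (simp add: is_linorder_def)
  note diagPhi = diag_iff[OF is_struc_Phi] and code = hlist_code_diag[OF A]
  have "gamma_accepts (diag A) \<phi> \<longleftrightarrow> \<phi> \<in> diag (Phi A)" for \<phi>
  proof (cases \<phi> rule: lit_cases)
    case (PosLess e e')
    then show ?thesis
      using lex_less_diag[OF A, of "list_decode e" "list_decode e'"]
      by (auto simp: code diagPhi in_fst_Phi in_snd_Phi hlists_def)
  next
    case (NegLess e e')
    have "e = e' \<longleftrightarrow> list_decode e = list_decode e'"
      by (metis list_decode_inverse)
    then show ?thesis
      using NegLess not_less_diag[OF A, of "list_decode e" "list_decode e'"]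
        not_lex_less_iff[OF lin, of "list_decode e" "list_decode e'"]
      by (auto simp: code diagPhi in_fst_Phi in_snd_Phi hlists_def)
  qed (auto simp: diagPhi in_fst_Phi code)
  then show ?thesis unfolding apply_op_Gamma by blast
qed

section \<open>The operator is computably enumerable\<close>

lemma eval_deterministic: "eval f xs y \<Longrightarrow> eval f xs y' \<Longrightarrow> y = y'"
proof (induction arbitrary: y' rule: eval.induct)
  case (ev_Comp ys gs xs f z)
  from ev_Comp.prems obtain ys' where ys': "length ys' = length gs"
    "\<forall>i<length gs. eval (gs ! i) xs (ys' ! i)" "eval f ys' y'"
    by (cases rule: eval.cases) auto
  have "ys = ys'"
    using ev_Comp.hyps(1) ev_Comp.IH(1) ys'(1,2) by (intro nth_equalityI) auto
  then show ?case using ev_Comp.IH(2) ys'(3) by blast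
next
  case (ev_Prec0 f xs y g)
  from ev_Prec0.prems have "eval f xs y'" by (cases rule: eval.cases) auto
  then show ?case using ev_Prec0.IH by blast
next
  case (ev_PrecS f g n xs y z)
  from ev_PrecS.prems obtain y2 where "eval (Prec f g) (n # xs) y2" "eval g (n # y2 # xs) y'"
    by (cases rule: eval.cases) auto
  then show ?case using ev_PrecS.IH by blast
next
  case (ev_Mu f y xs)
  from ev_Mu.prems have zero: "eval f (y' # xs) 0"
    and nonzero: "\<forall>k<y'. \<exists>v. eval f (k # xs) v \<and> v \<noteq> 0"
    by (cases rule: eval.cases, auto)+
  show ?case
  proof (rule linorder_cases)
    assume "y < y'"
    then obtain v where "eval f (y # xs) v" "v \<noteq> 0" using nonzero by blast
    then show ?thesis using ev_Mu.IH(1) by blast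
  next
    assume "y' < y"
    then obtain v where "eval f (y' # xs) v" "v \<noteq> 0" "\<forall>w. eval f (y' # xs) w \<longrightarrow> v = w"
      using ev_Mu.IH(2) by blast
    then show ?thesis using zero by blast
  qed
qed (auto elim: eval.cases)

definition computable :: "nat \<Rightarrow> (nat list \<Rightarrow> nat) \<Rightarrow> bool" where
  "computable n F \<longleftrightarrow> (\<exists>f. \<forall>xs. length xs = n \<longrightarrow> eval f xs (F xs))"

lemma computable_zero: "computable n (\<lambda>_. 0)"
  unfolding computable_def by (rule exI[of _ Zf]) (auto intro: ev_Z)

lemma computable_proj: "i < n \<Longrightarrow> computable n (\<lambda>xs. xs ! i)"
  unfolding computable_def by (rule exI[of _ "Proj i"]) (auto intro: ev_Proj)

lemma computable_compose:
  assumes G: "computable m G" and Fs: "\<And>i. i < m \<Longrightarrow> computable n (Fs i)"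
  shows "computable n (\<lambda>xs. G (map (\<lambda>i. Fs i xs) [0..<m]))"
proof -
  obtain g where g: "\<forall>ys. length ys = m \<longrightarrow> eval g ys (G ys)" using G unfolding computable_def by blast
  have "\<forall>i. \<exists>f. i < m \<longrightarrow> (\<forall>xs. length xs = n \<longrightarrow> eval f xs (Fs i xs))"
    using Fs unfolding computable_def by blast
  then obtain fs where fs: "\<And>i. i < m \<Longrightarrow> \<forall>xs. length xs = n \<longrightarrow> eval (fs i) xs (Fs i xs)"
    by metis
  show ?thesis unfolding computable_def
  proof (intro exI[of _ "Comp g (map fs [0..<m])"] allI impI)
    fix xs :: "nat list" assume len: "length xs = n"
    show "eval (Comp g (map fs [0..<m])) xs (G (map (\<lambda>i. Fs i xs) [0..<m]))"
    proof (rule ev_Comp)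
      show "length (map (\<lambda>i. Fs i xs) [0..<m]) = length (map fs [0..<m])" by simp
      show "\<forall>i<length (map fs [0..<m]). eval (map fs [0..<m] ! i) xs (map (\<lambda>i. Fs i xs) [0..<m] ! i)"
        using fs len by simp
      show "eval g (map (\<lambda>i. Fs i xs) [0..<m]) (G (map (\<lambda>i. Fs i xs) [0..<m]))" using g by simp
    qed
  qed
qed

lemma computable_comp1:
  assumes "computable 1 G" "computable n F1"
  shows "computable n (\<lambda>xs. G [F1 xs])"
  using computable_compose[OF assms(1), of n "\<lambda>i. F1"] assms(2) by simp

lemma computable_comp2:
  assumes "computable 2 G" "computable n F1" "computable n F2"
  shows "computable n (\<lambda>xs. G [F1 xs, F2 xs])"
proof -
  have "computable n (\<lambda>xs. G (map (\<lambda>i. (if i = 0 then F1 else F2) xs) [0..<2]))"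
    using assms by (intro computable_compose) auto
  moreover have "[0..<2] = [0, 1::nat]" by (simp add: upt_rec)
  ultimately show ?thesis by simp
qed

lemma computable_Suc_base: "computable 1 (\<lambda>xs. Suc (xs ! 0))"
  unfolding computable_def
proof (intro exI[of _ Sf] allI impI)
  fix xs :: "nat list" assume "length xs = 1"
  then obtain x where "xs = [x]" by (cases xs) auto
  then show "eval Sf xs (Suc (xs ! 0))" by (auto intro: ev_S)
qed

lemma computable_Suc: "computable n F \<Longrightarrow> computable n (\<lambda>xs. Suc (F xs))"
  using computable_comp1[OF computable_Suc_base] by simp

lemma computable_const: "computable n (\<lambda>_. k)"
  by (induction k) (auto intro: computable_zero computable_Suc)

primrec prim_rec :: "(nat list \<Rightarrow> nat) \<Rightarrow> (nat list \<Rightarrow> nat) \<Rightarrow> nat \<Rightarrow> nat list \<Rightarrow> nat" where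
  "prim_rec F G 0 ys = F ys"
| "prim_rec F G (Suc k) ys = G (k # prim_rec F G k ys # ys)"

lemma computable_prim_rec:
  assumes F: "computable n F" and G: "computable (Suc (Suc n)) G"
  shows "computable (Suc n) (\<lambda>xs. prim_rec F G (hd xs) (tl xs))"
proof -
  obtain f where f: "\<forall>ys. length ys = n \<longrightarrow> eval f ys (F ys)" using F unfolding computable_def by blast
  obtain g where g: "\<forall>ys. length ys = Suc (Suc n) \<longrightarrow> eval g ys (G ys)" using G unfolding computable_def by blast
  have main: "\<And>ys. length ys = n \<Longrightarrow> eval (Prec f g) (k # ys) (prim_rec F G k ys)" for k
  proof (induction k)
    case 0 then show ?case using f by (auto intro: ev_Prec0)
  next
    case (Suc k)
    have "eval (Prec f g) (k # ys) (prim_rec F G k ys)" using Suc by blast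
    moreover have "eval g (k # prim_rec F G k ys # ys) (G (k # prim_rec F G k ys # ys))" using g Suc.prems by simp
    ultimately show ?case by (simp add: ev_PrecS)
  qed
  show ?thesis unfolding computable_def
  proof (intro exI[of _ "Prec f g"] allI impI)
    fix xs :: "nat list" assume "length xs = Suc n"
    then obtain k ys where "xs = k # ys" "length ys = n" by (cases xs) auto
    then show "eval (Prec f g) xs (prim_rec F G (hd xs) (tl xs))" using main by simp
  qed
qed

lemma computable_cong: "computable n F \<Longrightarrow> (\<And>xs. length xs = n \<Longrightarrow> F xs = G xs) \<Longrightarrow> computable n G"
  unfolding computable_def by metis

lemma computable_add_base: "computable 2 (\<lambda>xs. xs ! 0 + xs ! 1)" (is "computable _ ?G")
proof -
  have c: "computable (Suc 1) (\<lambda>xs. prim_rec (\<lambda>ys. ys ! 0) (\<lambda>ys. Suc (ys ! 1)) (hd xs) (tl xs))"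
    by (rule computable_prim_rec) (auto intro: computable_proj computable_Suc)
  have "prim_rec (\<lambda>ys. ys ! 0) (\<lambda>ys. Suc (ys ! 1)) k ys = k + ys ! 0" for k ys
    by (induction k) auto
  then have "computable (Suc 1) ?G"
    by (intro computable_cong[OF c]) (auto simp: length_Suc_conv)
  then show ?thesis by (simp add: numeral_2_eq_2)
qed

lemma computable_add: "computable n F1 \<Longrightarrow> computable n F2 \<Longrightarrow> computable n (\<lambda>xs. F1 xs + F2 xs)"
  using computable_comp2[OF computable_add_base] by simp

lemma computable_mult_base: "computable 2 (\<lambda>xs. xs ! 0 * xs ! 1)" (is "computable _ ?G")
proof -
  have c: "computable (Suc 1) (\<lambda>xs. prim_rec (\<lambda>ys. 0) (\<lambda>ys. ys ! 1 + ys ! 2) (hd xs) (tl xs))"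
  proof (rule computable_prim_rec)
    show "computable 1 (\<lambda>ys. 0)" by (rule computable_zero)
    show "computable (Suc (Suc 1)) (\<lambda>ys. ys ! 1 + ys ! 2)" by (intro computable_add computable_proj) simp_all
  qed
  have "prim_rec (\<lambda>ys. 0) (\<lambda>ys. ys ! 1 + ys ! 2) k ys = k * ys ! 0" for k ys
    by (induction k) auto
  then have "computable (Suc 1) ?G"
    by (intro computable_cong[OF c]) (auto simp: length_Suc_conv)
  then show ?thesis by (simp add: numeral_2_eq_2)
qed

lemma computable_mult: "computable n F1 \<Longrightarrow> computable n F2 \<Longrightarrow> computable n (\<lambda>xs. F1 xs * F2 xs)"
  using computable_comp2[OF computable_mult_base] by simp

lemma computable_pred_base: "computable 1 (\<lambda>xs. xs ! 0 - 1)" (is "computable _ ?G")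
proof -
  have c: "computable (Suc 0) (\<lambda>xs. prim_rec (\<lambda>ys. 0) (\<lambda>ys. ys ! 0) (hd xs) (tl xs))"
    by (rule computable_prim_rec) (auto intro: computable_proj computable_zero)
  have "prim_rec (\<lambda>ys. 0) (\<lambda>ys. ys ! 0) k ys = k - 1" for k ys
    by (cases k) auto
  then have "computable (Suc 0) ?G"
    by (intro computable_cong[OF c]) (auto simp: length_Suc_conv)
  then show ?thesis by (simp add: numeral_2_eq_2)
qed

lemma computable_diff_base: "computable 2 (\<lambda>xs. xs ! 1 - xs ! 0)" (is "computable _ ?G")
proof -
  have c: "computable (Suc 1) (\<lambda>xs. prim_rec (\<lambda>ys. ys ! 0) (\<lambda>ys. ys ! 1 - 1) (hd xs) (tl xs))"
    by (rule computable_prim_rec)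
      (auto intro: computable_proj computable_comp1[OF computable_pred_base, of _ "\<lambda>ys. ys ! 1", simplified])
  have "prim_rec (\<lambda>ys. ys ! 0) (\<lambda>ys. ys ! 1 - 1) k ys = ys ! 0 - k" for k ys
    by (induction k) auto
  then have "computable (Suc 1) ?G"
    by (intro computable_cong[OF c]) (auto simp: length_Suc_conv)
  then show ?thesis by (simp add: numeral_2_eq_2)
qed

lemma computable_diff: "computable n F1 \<Longrightarrow> computable n F2 \<Longrightarrow> computable n (\<lambda>xs. F1 xs - F2 xs)"
  using computable_comp2[OF computable_diff_base, of n F2 F1] by simp




definition decidable :: "nat \<Rightarrow> (nat list \<Rightarrow> bool) \<Rightarrow> bool" where
  "decidable n P \<longleftrightarrow> computable n (\<lambda>xs. if P xs then 1 else 0)"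

lemma decidable_cong: assumes "decidable n P" "\<And>xs. length xs = n \<Longrightarrow> P xs = Q xs" shows "decidable n Q"
  using assms(1) unfolding decidable_def by (rule computable_cong) (simp add: assms(2))

lemma decidable_le: assumes "computable n F" "computable n G" shows "decidable n (\<lambda>xs. F xs \<le> G xs)"
proof -
  have "computable n (\<lambda>xs. 1 - (F xs - G xs))" by (intro computable_diff computable_const assms)
  then show ?thesis unfolding decidable_def by (rule computable_cong) auto
qed

lemma decidable_less: "computable n F \<Longrightarrow> computable n G \<Longrightarrow> decidable n (\<lambda>xs. F xs < G xs)"
  using decidable_le[OF computable_Suc[of n F], of G] by (simp add: Suc_le_eq)

lemma decidable_not: assumes "decidable n P" shows "decidable n (\<lambda>xs. \<not> P xs)"
proof -
  have "computable n (\<lambda>xs. 1 - (if P xs then 1 else 0))"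
    using assms unfolding decidable_def by (intro computable_diff computable_const)
  then show ?thesis unfolding decidable_def by (rule computable_cong) auto
qed

lemma decidable_conj: assumes "decidable n P" "decidable n Q" shows "decidable n (\<lambda>xs. P xs \<and> Q xs)"
proof -
  have "computable n (\<lambda>xs. (if P xs then 1 else 0) * (if Q xs then 1 else 0))"
    using assms unfolding decidable_def by (intro computable_mult)
  then show ?thesis unfolding decidable_def by (rule computable_cong) auto
qed

lemma decidable_disj: "decidable n P \<Longrightarrow> decidable n Q \<Longrightarrow> decidable n (\<lambda>xs. P xs \<or> Q xs)"
proof -
  assume "decidable n P" "decidable n Q"
  then have "decidable n (\<lambda>xs. \<not> (\<not> P xs \<and> \<not> Q xs))" by (intro decidable_not decidable_conj)
  then show ?thesis by simp
qed

lemma decidable_eq: "computable n F \<Longrightarrow> computable n G \<Longrightarrow> decidable n (\<lambda>xs. F xs = G xs)"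
proof -
  assume "computable n F" "computable n G"
  then have "decidable n (\<lambda>xs. F xs \<le> G xs \<and> G xs \<le> F xs)" by (intro decidable_conj decidable_le)
  then show ?thesis by (rule decidable_cong) auto
qed

lemma map_nth_Suc_upt: "length ys = Suc n \<Longrightarrow> map (\<lambda>i. ys ! Suc i) [0..<n] = tl ys"
  by (cases ys) (auto intro: nth_equalityI)

lemma computable_shift: "computable n F \<Longrightarrow> computable (Suc n) (\<lambda>ys. F (tl ys))"
proof -
  assume F: "computable n F"
  have "computable (Suc n) (\<lambda>ys. F (map (\<lambda>i. ys ! Suc i) [0..<n]))"
    using F by (intro computable_compose) (auto intro: computable_proj)
  then show ?thesis by (rule computable_cong) (simp add: map_nth_Suc_upt)
qed

lemma decidable_shift: "decidable n P \<Longrightarrow> decidable (Suc n) (\<lambda>ys. P (tl ys))"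
  unfolding decidable_def by (drule computable_shift) simp

lemma computable_hd: "computable (Suc n) (\<lambda>ys. hd ys)"
proof (rule computable_cong[OF computable_proj[of 0]])
  fix xs :: "nat list" assume "length xs = Suc n"
  then show "xs ! 0 = hd xs" by (cases xs) auto
qed simp

lemma computable_reindex:
  assumes F: "computable m F" and idx: "\<And>i. i < m \<Longrightarrow> idx i < n"
  shows "computable n (\<lambda>zs. F (map (\<lambda>i. zs ! idx i) [0..<m]))"
  using F idx by (intro computable_compose) (auto intro: computable_proj)

lemma computable_cons:
  assumes F: "computable (Suc n) F" and B: "computable n B"
  shows "computable n (\<lambda>xs. F (B xs # xs))"
proof -
  have c: "computable n (\<lambda>xs. F (map (\<lambda>i. (if i = 0 then B else (\<lambda>xs. xs ! (i - 1))) xs) [0..<Suc n]))"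
    using F B by (intro computable_compose) (auto intro: computable_proj)
  have eq: "map (\<lambda>i. (if i = 0 then B else (\<lambda>xs. xs ! (i - 1))) xs) [0..<Suc n] = B xs # xs"
    if "length xs = n" for xs
  proof (rule nth_equalityI)
    show "length (map (\<lambda>i. (if i = 0 then B else (\<lambda>xs. xs ! (i - 1))) xs) [0..<Suc n]) = length (B xs # xs)"
      using that by simp
    fix i assume "i < length (map (\<lambda>i. (if i = 0 then B else (\<lambda>xs. xs ! (i - 1))) xs) [0..<Suc n])"
    then have "i < Suc n" by simp
    then show "map (\<lambda>i. (if i = 0 then B else (\<lambda>xs. xs ! (i - 1))) xs) [0..<Suc n] ! i = (B xs # xs) ! i"
      by (cases i) (simp_all del: upt_Suc)
  qed
  show ?thesis by (rule computable_cong[OF c]) (simp add: eq del: upt_Suc)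
qed

lemma computable_bounded_sum_hd:
  assumes F: "computable (Suc n) F"
  shows "computable (Suc n) (\<lambda>ys. \<Sum>t<hd ys. F (t # tl ys))"
proof -
  have F2: "computable (Suc (Suc n)) (\<lambda>zs. F (zs ! 0 # tl (tl zs)))"
  proof -
    have c: "computable (Suc (Suc n)) (\<lambda>zs. F (map (\<lambda>i. zs ! (if i = 0 then 0 else Suc i)) [0..<Suc n]))"
      using F by (rule computable_reindex) auto
    have eq: "map (\<lambda>i. zs ! (if i = 0 then 0 else Suc i)) [0..<Suc n] = zs ! 0 # tl (tl zs)"
      if "length zs = Suc (Suc n)" for zs
    proof (rule nth_equalityI)
      show "length (map (\<lambda>i. zs ! (if i = 0 then 0 else Suc i)) [0..<Suc n]) = length (zs ! 0 # tl (tl zs))"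
        using that by simp
      fix i assume "i < length (map (\<lambda>i. zs ! (if i = 0 then 0 else Suc i)) [0..<Suc n])"
      then have "i < Suc n" by simp
      then show "map (\<lambda>i. zs ! (if i = 0 then 0 else Suc i)) [0..<Suc n] ! i = (zs ! 0 # tl (tl zs)) ! i"
        using that by (cases i) (simp_all add: nth_tl del: upt_Suc)
    qed
    show ?thesis by (rule computable_cong[OF c]) (simp add: eq del: upt_Suc)
  qed
  have G: "computable (Suc (Suc n)) (\<lambda>zs. zs ! 1 + F (zs ! 0 # tl (tl zs)))"
    by (rule computable_add[OF computable_proj F2]) simp
  have P: "computable (Suc n) (\<lambda>ys. prim_rec (\<lambda>_. 0) (\<lambda>zs. zs ! 1 + F (zs ! 0 # tl (tl zs))) (hd ys) (tl ys))"
    by (rule computable_prim_rec[OF computable_zero G])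
  have "prim_rec (\<lambda>_. 0) (\<lambda>zs. zs ! 1 + F (zs ! 0 # tl (tl zs))) k xs = (\<Sum>t<k. F (t # xs))" for k xs
    by (induction k) auto
  then show ?thesis by (intro computable_cong[OF P]) simp
qed

lemma computable_bounded_sum:
  assumes F: "computable (Suc n) F" and B: "computable n B"
  shows "computable n (\<lambda>xs. \<Sum>t<B xs. F (t # xs))"
  using computable_cons[OF computable_bounded_sum_hd[OF F] B] by simp

lemma sum_indicator_pos: "(0 < (\<Sum>t<(b::nat). if Q t then 1 else 0::nat)) \<longleftrightarrow> (\<exists>t<b. Q t)"
proof
  assume p: "0 < (\<Sum>t<b. if Q t then 1 else 0::nat)"
  show "\<exists>t<b. Q t"
  proof (rule ccontr)
    assume "\<not> (\<exists>t<b. Q t)"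
    then have "(\<Sum>t<b. if Q t then 1 else 0::nat) = 0" by (intro sum.neutral) auto
    then show False using p by simp
  qed
next
  assume "\<exists>t<b. Q t"
  then obtain t where t: "t < b" "Q t" by blast
  have "(if Q t then 1 else 0::nat) \<le> (\<Sum>t<b. if Q t then 1 else 0::nat)"
    by (rule member_le_sum) (use t in auto)
  then show "0 < (\<Sum>t<b. if Q t then 1 else 0::nat)" using t by simp
qed

lemma decidable_bex:
  assumes P: "decidable (Suc n) P" and B: "computable n B"
  shows "decidable n (\<lambda>xs. \<exists>t<B xs. P (t # xs))"
proof -
  have "computable n (\<lambda>xs. \<Sum>t<B xs. (\<lambda>ys. if P ys then 1 else 0) (t # xs))"
    using P B unfolding decidable_def by (rule computable_bounded_sum)
  then have s: "computable n (\<lambda>xs. \<Sum>t<B xs. (if P (t # xs) then 1 else 0::nat))" by simp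
  have "decidable n (\<lambda>xs. 0 < (\<Sum>t<B xs. (if P (t # xs) then 1 else 0::nat)))"
    using decidable_less[OF computable_zero s] by simp
  then show ?thesis by (rule decidable_cong) (simp only: sum_indicator_pos)
qed

lemma decidable_ball:
  assumes P: "decidable (Suc n) P" and B: "computable n B"
  shows "decidable n (\<lambda>xs. \<forall>t<B xs. P (t # xs))"
proof -
  have "decidable n (\<lambda>xs. \<not> (\<exists>t<B xs. \<not> P (t # xs)))"
    by (intro decidable_not decidable_bex[OF _ B] decidable_not[OF P])
  then show ?thesis by (rule decidable_cong) auto
qed

lemma computable_iterate_base:
  assumes H: "computable 1 H"
  shows "computable 2 (\<lambda>xs. ((\<lambda>x. H [x]) ^^ (xs ! 0)) (xs ! 1))"
proof -
  have G: "computable (Suc (Suc 1)) (\<lambda>zs. H [zs ! 1])"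
    by (rule computable_comp1[OF H computable_proj]) simp
  have P: "computable (Suc 1) (\<lambda>ys. prim_rec (\<lambda>zs. zs ! 0) (\<lambda>zs. H [zs ! 1]) (hd ys) (tl ys))"
    by (rule computable_prim_rec[OF computable_proj G]) simp
  have "prim_rec (\<lambda>zs. zs ! 0) (\<lambda>zs. H [zs ! 1]) k xs = ((\<lambda>x. H [x]) ^^ k) (xs ! 0)" for k xs
    by (induction k) auto
  then have "computable (Suc 1) (\<lambda>xs. ((\<lambda>x. H [x]) ^^ (xs ! 0)) (xs ! 1))"
    by (intro computable_cong[OF P]) (auto simp: length_Suc_conv)
  then show ?thesis by (simp add: numeral_2_eq_2)
qed

lemma computable_iterate:
  assumes H: "computable 1 H" and K: "computable n K" and C: "computable n C"
  shows "computable n (\<lambda>xs. ((\<lambda>x. H [x]) ^^ (K xs)) (C xs))"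
  using computable_comp2[OF computable_iterate_base[OF H] K C] by simp




lemma computable_triangle_base: "computable 1 (\<lambda>xs. triangle (xs ! 0))"
proof -
  have G: "computable (Suc (Suc 0)) (\<lambda>zs. zs ! 1 + Suc (zs ! 0))"
    by (intro computable_add computable_Suc computable_proj) simp_all
  have P: "computable (Suc 0) (\<lambda>ys. prim_rec (\<lambda>_. 0) (\<lambda>zs. zs ! 1 + Suc (zs ! 0)) (hd ys) (tl ys))"
    by (rule computable_prim_rec[OF computable_zero G])
  have "prim_rec (\<lambda>_. 0) (\<lambda>zs. zs ! 1 + Suc (zs ! 0)) k ys = triangle k" for k ys
    by (induction k) auto
  then have "computable (Suc 0) (\<lambda>xs. triangle (xs ! 0))"
    by (intro computable_cong[OF P]) (auto simp: length_Suc_conv)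
  then show ?thesis by simp
qed

lemma computable_triangle: "computable n F \<Longrightarrow> computable n (\<lambda>xs. triangle (F xs))"
  using computable_comp1[OF computable_triangle_base] by simp

lemma computable_prod_encode: "computable n F \<Longrightarrow> computable n G \<Longrightarrow> computable n (\<lambda>xs. prod_encode (F xs, G xs))"
  unfolding prod_encode_def by (simp add: computable_add computable_triangle)

text \<open>\<open>tri_root z\<close> counts the \<open>t\<close> with \<open>triangle (t + 1) \<le> z\<close>, i.e. it is the \<open>s\<close> with
  \<open>triangle s \<le> z < triangle (s + 1)\<close>; \<open>prod_decode z\<close> is read off from it.\<close>

definition tri_root :: "nat \<Rightarrow> nat" where
  "tri_root z = (\<Sum>t<z. if triangle (Suc t) \<le> z then 1 else 0)"

lemma computable_tri_root: "computable n F \<Longrightarrow> computable n (\<lambda>xs. tri_root (F xs))"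
proof -
  assume F: "computable n F"
  have "decidable (Suc n) (\<lambda>ys. triangle (Suc (hd ys)) \<le> F (tl ys))"
    by (intro decidable_le computable_triangle computable_Suc computable_hd computable_shift F)
  then have "computable n (\<lambda>xs. \<Sum>t<F xs. (\<lambda>ys. if triangle (Suc (hd ys)) \<le> F (tl ys) then 1 else 0) (t # xs))"
    unfolding decidable_def by (rule computable_bounded_sum[OF _ F])
  then show ?thesis unfolding tri_root_def by simp
qed

lemma triangle_mono: "a \<le> b \<Longrightarrow> triangle a \<le> triangle b"
  by (induction b) (auto simp: le_Suc_eq)

lemma le_triangle: "n \<le> triangle n"
  by (induction n) auto

lemma sum_indicator_less: "s \<le> z \<Longrightarrow> (\<Sum>t<z. if t < s then 1 else 0::nat) = s"
proof (induction z)
  case 0 then show ?case by simp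
next
  case (Suc z)
  show ?case
  proof (cases "s \<le> z")
    case True then show ?thesis using Suc by simp
  next
    case False
    then have s: "s = Suc z" using Suc.prems by simp
    have "(\<Sum>t<Suc z. if t < s then 1 else 0::nat) = (\<Sum>t<Suc z. 1)"
      using s by (intro sum.cong) auto
    then show ?thesis using s by simp
  qed
qed

definition code_fst :: "nat \<Rightarrow> nat" where "code_fst z = z - triangle (tri_root z)"
definition code_snd :: "nat \<Rightarrow> nat" where "code_snd z = tri_root z - code_fst z"

lemma prod_decode_eq_code: "prod_decode z = (code_fst z, code_snd z)"
proof -
  obtain m k where mk: "prod_decode z = (m, k)" by (cases "prod_decode z")
  have z: "z = triangle (m + k) + m"
    using prod_decode_inverse[of z] mk by (simp add: prod_encode_def)
  define s where "s = m + k"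
  have sz: "s \<le> z" using le_triangle[of s] z s_def by simp
  have iff: "triangle (Suc t) \<le> z \<longleftrightarrow> t < s" for t
  proof
    assume a: "triangle (Suc t) \<le> z"
    show "t < s"
    proof (rule ccontr)
      assume "\<not> t < s"
      then have "triangle (Suc s) \<le> triangle (Suc t)" by (intro triangle_mono) simp
      then show False using a z s_def by simp
    qed
  next
    assume "t < s"
    then have "triangle (Suc t) \<le> triangle s" by (intro triangle_mono) simp
    then show "triangle (Suc t) \<le> z" using z s_def by simp
  qed
  have "tri_root z = s" unfolding tri_root_def iff using sum_indicator_less[OF sz] .
  then have "code_fst z = m" "code_snd z = k" unfolding code_fst_def code_snd_def using z s_def by auto
  then show ?thesis using mk by simp
qed

lemma computable_code_fst: "computable n F \<Longrightarrow> computable n (\<lambda>xs. code_fst (F xs))"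
  unfolding code_fst_def by (intro computable_diff computable_triangle computable_tri_root)

lemma computable_code_snd: "computable n F \<Longrightarrow> computable n (\<lambda>xs. code_snd (F xs))"
  unfolding code_snd_def by (intro computable_diff computable_tri_root computable_code_fst)

text \<open>Since \<open>0\<close> codes \<open>[]\<close>, \<open>code_drop k c \<noteq> 0\<close> says
  that the coded list has more than \<open>k\<close> entries; \<open>code_hd 0\<close> and \<open>code_nth\<close> out of range are
  junk.\<close>

definition code_tl :: "nat \<Rightarrow> nat" where "code_tl c = code_snd (c - 1)"
definition code_hd :: "nat \<Rightarrow> nat" where "code_hd c = code_fst (c - 1)"
definition code_drop :: "nat \<Rightarrow> nat \<Rightarrow> nat" where "code_drop k c = (code_tl ^^ k) c"
definition code_nth :: "nat \<Rightarrow> nat \<Rightarrow> nat" where "code_nth c k = code_hd (code_drop k c)"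

lemma computable_code_tl: "computable n F \<Longrightarrow> computable n (\<lambda>xs. code_tl (F xs))"
  unfolding code_tl_def by (intro computable_code_snd computable_diff computable_const)

lemma computable_code_hd: "computable n F \<Longrightarrow> computable n (\<lambda>xs. code_hd (F xs))"
  unfolding code_hd_def by (intro computable_code_fst computable_diff computable_const)

lemma computable_code_drop: "computable n K \<Longrightarrow> computable n C \<Longrightarrow> computable n (\<lambda>xs. code_drop (K xs) (C xs))"
proof -
  assume K: "computable n K" and C: "computable n C"
  have H: "computable 1 (\<lambda>ys. code_tl (ys ! 0))" by (intro computable_code_tl computable_proj) simp
  have "(\<lambda>x. (\<lambda>ys. code_tl (ys ! 0)) [x]) = code_tl" by auto
  then show ?thesis using computable_iterate[OF H K C] unfolding code_drop_def by simp
qed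

lemma computable_code_nth: "computable n C \<Longrightarrow> computable n K \<Longrightarrow> computable n (\<lambda>xs. code_nth (C xs) (K xs))"
  unfolding code_nth_def by (intro computable_code_hd computable_code_drop)

lemma list_decode_code_tl: "list_decode (code_tl c) = tl (list_decode c)"
proof (cases c)
  case 0
  have "prod_decode 0 = (0, 0)" using prod_encode_inverse[of "(0, 0)"] by (simp add: prod_encode_def)
  then have "code_tl 0 = 0" unfolding code_tl_def using prod_decode_eq_code[of 0] by simp
  then show ?thesis using 0 by simp
next
  case (Suc k)
  then show ?thesis unfolding code_tl_def using prod_decode_eq_code[of k] by simp
qed

lemma code_hd_eq: "c \<noteq> 0 \<Longrightarrow> code_hd c = hd (list_decode c)"
proof -
  assume "c \<noteq> 0"
  then obtain k where "c = Suc k" by (cases c) auto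
  then show ?thesis unfolding code_hd_def using prod_decode_eq_code[of k] by simp
qed

lemma list_decode_code_drop: "list_decode (code_drop k c) = drop k (list_decode c)"
  unfolding code_drop_def by (induction k) (auto simp: list_decode_code_tl drop_Suc tl_drop)

lemma code_drop_eq_0_iff: "code_drop k c = 0 \<longleftrightarrow> length (list_decode c) \<le> k"
proof -
  have "code_drop k c = 0 \<longleftrightarrow> list_decode (code_drop k c) = []"
    by (metis list_decode.simps(1) list_decode_inverse list_encode.simps(1))
  then show ?thesis by (simp add: list_decode_code_drop)
qed

lemma code_nth_eq: "k < length (list_decode c) \<Longrightarrow> code_nth c k = list_decode c ! k"
proof -
  assume k: "k < length (list_decode c)"
  then have "code_drop k c \<noteq> 0" using code_drop_eq_0_iff by simp
  then have "code_nth c k = hd (list_decode (code_drop k c))" unfolding code_nth_def by (rule code_hd_eq)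
  then show ?thesis using k by (simp add: list_decode_code_drop hd_drop_conv_nth)
qed

lemma length_le_list_encode: "length xs \<le> list_encode xs"
proof (induction xs)
  case Nil then show ?case by simp
next
  case (Cons x xs)
  have "list_encode xs \<le> prod_encode (x, list_encode xs)" by (rule le_prod_encode_2)
  then show ?case using Cons by simp
qed

lemma length_list_decode_le: "length (list_decode c) \<le> c"
  using length_le_list_encode[of "list_decode c"] by simp




lemma decidable_imp: "decidable n P \<Longrightarrow> decidable n Q \<Longrightarrow> decidable n (\<lambda>xs. P xs \<longrightarrow> Q xs)"
proof -
  assume "decidable n P" "decidable n Q"
  then have "decidable n (\<lambda>xs. \<not> P xs \<or> Q xs)" by (intro decidable_disj decidable_not)
  then show ?thesis by simp
qed

lemma decidable_neq: "computable n F \<Longrightarrow> computable n G \<Longrightarrow> decidable n (\<lambda>xs. F xs \<noteq> G xs)"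
  by (intro decidable_not decidable_eq)

definition code_mem :: "nat \<Rightarrow> nat \<Rightarrow> bool" where
  "code_mem v L \<longleftrightarrow> (\<exists>k<L. code_drop k L \<noteq> 0 \<and> code_nth L k = v)"

lemma code_mem_iff: "code_mem v L \<longleftrightarrow> v \<in> set (list_decode L)"
proof
  assume "code_mem v L"
  then obtain k where k: "code_drop k L \<noteq> 0" "code_nth L k = v" unfolding code_mem_def by blast
  then have kl: "k < length (list_decode L)" using code_drop_eq_0_iff by simp
  then show "v \<in> set (list_decode L)" using k code_nth_eq by auto
next
  assume "v \<in> set (list_decode L)"
  then obtain k where k: "k < length (list_decode L)" "list_decode L ! k = v" by (auto simp: in_set_conv_nth)
  then have "k < L" using length_list_decode_le[of L] by simp
  moreover have "code_drop k L \<noteq> 0" using k code_drop_eq_0_iff by simp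
  ultimately show "code_mem v L" unfolding code_mem_def using k code_nth_eq by auto
qed

lemma decidable_code_mem:
  assumes V: "computable n V" and L: "computable n L"
  shows "decidable n (\<lambda>xs. code_mem (V xs) (L xs))"
proof -
  have "decidable (Suc n) (\<lambda>ys. code_drop (hd ys) (L (tl ys)) \<noteq> 0 \<and> code_nth (L (tl ys)) (hd ys) = V (tl ys))"
    by (intro decidable_conj decidable_neq decidable_eq computable_code_drop computable_code_nth computable_hd computable_shift V L computable_zero)
  from decidable_bex[OF this L] show ?thesis unfolding code_mem_def by simp
qed

lemma sum_div4: "(\<Sum>t<c. if 4 * Suc t \<le> c then 1 else 0::nat) = c div 4"
proof -
  have "(\<Sum>t<c. if 4 * Suc t \<le> c then 1 else 0::nat) = (\<Sum>t<c. if t < c div 4 then 1 else 0)"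
  proof (intro sum.cong refl)
    fix t assume "t \<in> {..<c}"
    have "4 * Suc t \<le> c \<longleftrightarrow> Suc t \<le> c div 4"
      using less_eq_div_iff_mult_less_eq[of 4 "Suc t" c] by (simp add: mult.commute)
    then show "(if 4 * Suc t \<le> c then 1 else 0::nat) = (if t < c div 4 then 1 else 0)"
      by (simp add: Suc_le_eq)
  qed
  also have "\<dots> = c div 4" by (rule sum_indicator_less) simp
  finally show ?thesis .
qed

lemma computable_div4: "computable n F \<Longrightarrow> computable n (\<lambda>xs. F xs div 4)"
proof -
  assume F: "computable n F"
  have "decidable (Suc n) (\<lambda>ys. 4 * Suc (hd ys) \<le> F (tl ys))"
    by (intro decidable_le computable_mult computable_const computable_Suc computable_hd computable_shift F)
  then have "computable n (\<lambda>xs. \<Sum>t<F xs. (\<lambda>ys. if 4 * Suc (hd ys) \<le> F (tl ys) then 1 else 0) (t # xs))"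
    unfolding decidable_def by (rule computable_bounded_sum[OF _ F])
  then show ?thesis using sum_div4 by simp
qed

lemma computable_mod4: "computable n F \<Longrightarrow> computable n (\<lambda>xs. F xs mod 4)"
proof -
  assume F: "computable n F"
  have "computable n (\<lambda>xs. F xs - 4 * (F xs div 4))" by (intro computable_diff computable_mult computable_const computable_div4 F)
  then show ?thesis by (simp add: minus_div_mult_eq_mod[symmetric] mult.commute)
qed



definition lit_decode :: "nat \<Rightarrow> lit" where
  "lit_decode c = (if c mod 4 = 0 then Pos (AEq (code_fst (c div 4)) (code_snd (c div 4)))
     else if c mod 4 = 1 then Neg (AEq (code_fst (c div 4)) (code_snd (c div 4)))
     else if c mod 4 = 2 then Pos (ALess (code_fst (c div 4)) (code_snd (c div 4)))
     else Neg (ALess (code_fst (c div 4)) (code_snd (c div 4))))"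

lemma enc_lit_codes:
  "enc_lit (Pos (AEq e e')) = 4 * prod_encode (e, e')"
  "enc_lit (Neg (AEq e e')) = 4 * prod_encode (e, e') + 1"
  "enc_lit (Pos (ALess e e')) = 4 * prod_encode (e, e') + 2"
  "enc_lit (Neg (ALess e e')) = 4 * prod_encode (e, e') + 3"
  by simp_all

lemma code_fst_snd_prod_encode: "code_fst (prod_encode (e, e')) = e" "code_snd (prod_encode (e, e')) = e'"
  using prod_decode_eq_code[of "prod_encode (e, e')"] by (simp_all add: prod_encode_inverse)

lemma div_mod_4: "(4 * p) div 4 = (p::nat)" "(4 * p) mod 4 = (0::nat)"
  "Suc (4 * p) div 4 = p" "Suc (4 * p) mod 4 = 1"
  "Suc (Suc (4 * p)) div 4 = p" "Suc (Suc (4 * p)) mod 4 = 2"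
  "Suc (Suc (Suc (4 * p))) div 4 = p" "Suc (Suc (Suc (4 * p))) mod 4 = 3"
  by presburger+

lemma lit_decode_enc: "lit_decode (enc_lit \<phi>) = \<phi>"
  by (cases \<phi> rule: lit_cases) (simp_all add: lit_decode_def code_fst_snd_prod_encode div_mod_4)

lemma enc_lit_decode: "enc_lit (lit_decode c) = c"
proof -
  have pe: "prod_encode (code_fst w, code_snd w) = w" for w
    using prod_decode_eq_code[of w] prod_decode_inverse[of w] by simp
  have "c mod 4 = 0 \<or> c mod 4 = 1 \<or> c mod 4 = 2 \<or> c mod 4 = 3" by arith
  then have "enc_lit (lit_decode c) = 4 * (c div 4) + c mod 4"
    by (elim disjE) (simp_all add: lit_decode_def pe)
  then show ?thesis by simp
qed

lemma mem_lit_decode_image: "\<psi> \<in> lit_decode ` S \<longleftrightarrow> enc_lit \<psi> \<in> S"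
  by (metis lit_decode_enc enc_lit_decode image_iff)

definition headed_code :: "nat \<Rightarrow> bool" where
  "headed_code e \<longleftrightarrow> e \<noteq> 0 \<and> code_drop (Suc (code_hd e)) e = 0 \<and> code_drop (code_hd e) e \<noteq> 0"

lemma list_decode_eq_Nil_iff: "list_decode e = [] \<longleftrightarrow> e = 0"
  by (metis list_decode.simps(1) list_decode_inverse list_encode.simps(1))

lemma headed_code_iff: "headed_code e \<longleftrightarrow> headed (list_decode e)"
proof (cases "e = 0")
  case False
  then have "list_decode e \<noteq> []" "code_hd e = hd (list_decode e)"
    using list_decode_eq_Nil_iff code_hd_eq by auto
  then show ?thesis unfolding headed_code_def headed_def using False code_drop_eq_0_iff by auto
qed (simp add: headed_code_def headed_def)

lemma decidable_headed_code: "computable n E \<Longrightarrow> decidable n (\<lambda>xs. headed_code (E xs))"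
  unfolding headed_code_def
  by (intro decidable_conj decidable_neq decidable_eq computable_code_drop computable_code_hd
      computable_Suc computable_zero)

lemma computable_enc_lit:
  assumes "computable n F" "computable n G"
  shows "computable n (\<lambda>xs. enc_lit (Pos (AEq (F xs) (G xs))))"
    "computable n (\<lambda>xs. enc_lit (Pos (ALess (F xs) (G xs))))"
    "computable n (\<lambda>xs. enc_lit (Neg (ALess (F xs) (G xs))))"
  unfolding enc_lit_codes
  by (intro computable_add computable_mult computable_const computable_prod_encode assms)+

definition elems_declared :: "nat \<Rightarrow> nat \<Rightarrow> bool" where
  "elems_declared L e \<longleftrightarrow>
     (\<forall>k<e. code_drop k e \<noteq> 0 \<longrightarrow> code_mem (enc_lit (Pos (AEq (code_nth e k) (code_nth e k)))) L)"

lemma elems_declared_iff: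
  "elems_declared L e \<longleftrightarrow> elem_lits e \<subseteq> lit_decode ` set (list_decode L)"
proof -
  have "elems_declared L e \<longleftrightarrow> (\<forall>a\<in>set (list_decode e). enc_lit (Pos (AEq a a)) \<in> set (list_decode L))"
  proof
    assume declared: "elems_declared L e"
    show "\<forall>a\<in>set (list_decode e). enc_lit (Pos (AEq a a)) \<in> set (list_decode L)"
    proof
      fix a assume "a \<in> set (list_decode e)"
      then obtain k where k: "k < length (list_decode e)" "list_decode e ! k = a"
        by (auto simp: in_set_conv_nth)
      moreover have "k < e" using k(1) length_list_decode_le[of e] by simp
      ultimately show "enc_lit (Pos (AEq a a)) \<in> set (list_decode L)"
        using declared code_drop_eq_0_iff code_nth_eq code_mem_iff
        unfolding elems_declared_def by (metis not_le)
    qed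
  next
    assume "\<forall>a\<in>set (list_decode e). enc_lit (Pos (AEq a a)) \<in> set (list_decode L)"
    then show "elems_declared L e"
      unfolding elems_declared_def
      by (auto simp: code_drop_eq_0_iff code_nth_eq code_mem_iff not_le)
  qed
  then show ?thesis by (simp only: elem_lits_def image_subset_iff mem_lit_decode_image)
qed

lemma decidable_elems_declared:
  assumes L: "computable n L" and E: "computable n E"
  shows "decidable n (\<lambda>xs. elems_declared (L xs) (E xs))"
proof -
  have "decidable (Suc n) (\<lambda>ys. code_drop (hd ys) (E (tl ys)) \<noteq> 0 \<longrightarrow>
      code_mem (enc_lit (Pos (AEq (code_nth (E (tl ys)) (hd ys)) (code_nth (E (tl ys)) (hd ys)))))
        (L (tl ys)))"
    by (intro decidable_imp decidable_neq decidable_code_mem computable_code_drop computable_enc_lit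
        computable_code_nth computable_hd computable_shift E L computable_zero)
  from decidable_ball[OF this E] show ?thesis unfolding elems_declared_def by simp
qed

definition hlist_code_at :: "nat \<Rightarrow> nat \<Rightarrow> bool" where
  "hlist_code_at L e \<longleftrightarrow> headed_code e \<and> elems_declared L e"

lemma hlist_code_at_iff: "hlist_code_at L e \<longleftrightarrow> hlist_code (lit_decode ` set (list_decode L)) e"
  by (simp add: hlist_code_at_def hlist_code_def headed_code_iff elems_declared_iff)

lemma decidable_hlist_code_at:
  "computable n L \<Longrightarrow> computable n E \<Longrightarrow> decidable n (\<lambda>xs. hlist_code_at (L xs) (E xs))"
  unfolding hlist_code_at_def by (intro decidable_conj decidable_headed_code decidable_elems_declared)

definition code_take_eq :: "nat \<Rightarrow> nat \<Rightarrow> nat \<Rightarrow> bool" where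
  "code_take_eq e e' i \<longleftrightarrow> (\<forall>j<i. code_nth e j = code_nth e' j)"

lemma code_take_eq_iff:
  assumes "i \<le> length (list_decode e)" "i \<le> length (list_decode e')"
  shows "code_take_eq e e' i \<longleftrightarrow> take i (list_decode e) = take i (list_decode e')"
proof -
  have "code_take_eq e e' i \<longleftrightarrow> (\<forall>j<i. list_decode e ! j = list_decode e' ! j)"
    unfolding code_take_eq_def using assms code_nth_eq by auto
  also have "\<dots> \<longleftrightarrow> take i (list_decode e) = take i (list_decode e')"
    using assms by (auto simp: list_eq_iff_nth_eq)
  finally show ?thesis .
qed

lemma decidable_code_take_eq:
  assumes E: "computable n E" and E': "computable n E'" and I: "computable n I"
  shows "decidable n (\<lambda>xs. code_take_eq (E xs) (E' xs) (I xs))"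
proof -
  have "decidable (Suc n) (\<lambda>ys. code_nth (E (tl ys)) (hd ys) = code_nth (E' (tl ys)) (hd ys))"
    by (intro decidable_eq computable_code_nth computable_hd computable_shift E E')
  from decidable_ball[OF this I] show ?thesis unfolding code_take_eq_def by simp
qed

definition less_witness :: "nat \<Rightarrow> nat \<Rightarrow> nat \<Rightarrow> bool" where
  "less_witness L e e' \<longleftrightarrow> (\<exists>i<e. code_drop i e \<noteq> 0 \<and> code_drop i e' \<noteq> 0 \<and> code_take_eq e e' i \<and>
      code_mem (enc_lit (Pos (ALess (code_nth e i) (code_nth e' i)))) L)"

definition not_less_witness :: "nat \<Rightarrow> nat \<Rightarrow> nat \<Rightarrow> bool" where
  "not_less_witness L e e' \<longleftrightarrow> (\<exists>i<e. code_drop i e \<noteq> 0 \<and> code_drop i e' \<noteq> 0 \<and> code_take_eq e e' i \<and>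
      code_nth e i \<noteq> code_nth e' i \<and> code_mem (enc_lit (Neg (ALess (code_nth e i) (code_nth e' i)))) L)"

lemma decidable_less_witness:
  assumes L: "computable n L" and E: "computable n E" and E': "computable n E'"
  shows "decidable n (\<lambda>xs. less_witness (L xs) (E xs) (E' xs))"
proof -
  have "decidable (Suc n) (\<lambda>ys. code_drop (hd ys) (E (tl ys)) \<noteq> 0 \<and>
      code_drop (hd ys) (E' (tl ys)) \<noteq> 0 \<and> code_take_eq (E (tl ys)) (E' (tl ys)) (hd ys) \<and>
      code_mem (enc_lit (Pos (ALess (code_nth (E (tl ys)) (hd ys)) (code_nth (E' (tl ys)) (hd ys)))))
        (L (tl ys)))"
    by (intro decidable_conj decidable_neq decidable_code_take_eq decidable_code_mem
        computable_code_drop computable_enc_lit computable_code_nth computable_hd computable_shift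
        E E' L computable_zero)
  from decidable_bex[OF this E] show ?thesis unfolding less_witness_def by simp
qed

lemma decidable_not_less_witness:
  assumes L: "computable n L" and E: "computable n E" and E': "computable n E'"
  shows "decidable n (\<lambda>xs. not_less_witness (L xs) (E xs) (E' xs))"
proof -
  have "decidable (Suc n) (\<lambda>ys. code_drop (hd ys) (E (tl ys)) \<noteq> 0 \<and>
      code_drop (hd ys) (E' (tl ys)) \<noteq> 0 \<and> code_take_eq (E (tl ys)) (E' (tl ys)) (hd ys) \<and>
      code_nth (E (tl ys)) (hd ys) \<noteq> code_nth (E' (tl ys)) (hd ys) \<and>
      code_mem (enc_lit (Neg (ALess (code_nth (E (tl ys)) (hd ys)) (code_nth (E' (tl ys)) (hd ys)))))
        (L (tl ys)))"
    by (intro decidable_conj decidable_neq decidable_code_take_eq decidable_code_mem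
        computable_code_drop computable_enc_lit computable_code_nth computable_hd computable_shift
        E E' L computable_zero)
  from decidable_bex[OF this E] show ?thesis unfolding not_less_witness_def by simp
qed

lemma less_witness_iff:
  "less_witness L e e' \<longleftrightarrow> (\<exists>i. i < length (list_decode e) \<and> i < length (list_decode e') \<and>
    take i (list_decode e) = take i (list_decode e') \<and>
    Pos (ALess (list_decode e ! i) (list_decode e' ! i)) \<in> lit_decode ` set (list_decode L))"
    (is "_ \<longleftrightarrow> (\<exists>i. ?P i)")
proof
  assume "less_witness L e e'"
  then obtain i where "code_drop i e \<noteq> 0" "code_drop i e' \<noteq> 0" "code_take_eq e e' i"
    "code_mem (enc_lit (Pos (ALess (code_nth e i) (code_nth e' i)))) L"
    unfolding less_witness_def by blast
  then have "?P i"
    using code_take_eq_iff[of i e e']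
    by (auto simp: code_drop_eq_0_iff code_nth_eq code_mem_iff mem_lit_decode_image)
  then show "\<exists>i. ?P i" ..
next
  assume "\<exists>i. ?P i"
  then obtain i where "?P i" ..
  moreover have "i < e" using \<open>?P i\<close> length_list_decode_le[of e] by simp
  ultimately show "less_witness L e e'"
    unfolding less_witness_def using code_take_eq_iff[of i e e']
    by (intro exI[of _ i]) (auto simp: code_drop_eq_0_iff code_nth_eq code_mem_iff mem_lit_decode_image)
qed

lemma not_less_witness_iff:
  "not_less_witness L e e' \<longleftrightarrow> (\<exists>i. i < length (list_decode e) \<and> i < length (list_decode e') \<and>
    take i (list_decode e) = take i (list_decode e') \<and> list_decode e ! i \<noteq> list_decode e' ! i \<and>
    Neg (ALess (list_decode e ! i) (list_decode e' ! i)) \<in> lit_decode ` set (list_decode L))"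
    (is "_ \<longleftrightarrow> (\<exists>i. ?P i)")
proof
  assume "not_less_witness L e e'"
  then obtain i where "code_drop i e \<noteq> 0" "code_drop i e' \<noteq> 0" "code_take_eq e e' i" "code_nth e i \<noteq> code_nth e' i"
    "code_mem (enc_lit (Neg (ALess (code_nth e i) (code_nth e' i)))) L"
    unfolding not_less_witness_def by blast
  then have "?P i"
    using code_take_eq_iff[of i e e']
    by (auto simp: code_drop_eq_0_iff code_nth_eq code_mem_iff mem_lit_decode_image)
  then show "\<exists>i. ?P i" ..
next
  assume "\<exists>i. ?P i"
  then obtain i where "?P i" ..
  moreover have "i < e" using \<open>?P i\<close> length_list_decode_le[of e] by simp
  ultimately show "not_less_witness L e e'"
    unfolding not_less_witness_def using code_take_eq_iff[of i e e']
    by (intro exI[of _ i]) (auto simp: code_drop_eq_0_iff code_nth_eq code_mem_iff mem_lit_decode_image)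
qed

definition accepts_code :: "nat \<Rightarrow> nat \<Rightarrow> bool" where
  "accepts_code L c \<longleftrightarrow> (let e = code_fst (c div 4); e' = code_snd (c div 4) in
    (c mod 4 = 0 \<and> e = e' \<and> hlist_code_at L e) \<or>
    (c mod 4 = 1 \<and> e \<noteq> e' \<and> hlist_code_at L e \<and> hlist_code_at L e') \<or>
    (c mod 4 = 2 \<and> hlist_code_at L e \<and> hlist_code_at L e' \<and> less_witness L e e') \<or>
    (c mod 4 = 3 \<and> hlist_code_at L e \<and> hlist_code_at L e' \<and> (e = e' \<or> not_less_witness L e e')))"

lemma accepts_code_iff:
  "accepts_code L c \<longleftrightarrow> gamma_accepts (lit_decode ` set (list_decode L)) (lit_decode c)"
proof -
  have "c mod 4 = 0 \<or> c mod 4 = 1 \<or> c mod 4 = 2 \<or> c mod 4 = 3" by arith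
  then show ?thesis
    by (elim disjE) (simp_all add: accepts_code_def Let_def lit_decode_def[of c] hlist_code_at_iff
        less_witness_iff not_less_witness_iff)
qed

lemma decidable_accepts_code:
  "decidable 1 (\<lambda>xs. accepts_code (code_fst (xs ! 0)) (code_snd (xs ! 0)))"
  unfolding accepts_code_def Let_def
  by (intro decidable_disj decidable_conj decidable_eq decidable_neq decidable_hlist_code_at
      decidable_less_witness decidable_not_less_witness computable_code_fst computable_code_snd
      computable_div4 computable_mod4 computable_const computable_proj) simp_all

lemma mem_enc_pair_Gamma: "x \<in> enc_pair ` Gamma \<longleftrightarrow> accepts_code (code_fst x) (code_snd x)"
proof
  assume "x \<in> enc_pair ` Gamma"
  then obtain \<alpha> \<phi> where x: "x = enc_pair (\<alpha>, \<phi>)" and acc: "gamma_accepts (set \<alpha>) \<phi>"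
    by (auto simp: Gamma_def)
  have "code_fst x = list_encode (map enc_lit \<alpha>)" "code_snd x = enc_lit \<phi>"
    using x prod_decode_eq_code[of x] by (auto simp: enc_pair_def prod_encode_inverse)
  then show "accepts_code (code_fst x) (code_snd x)"
    using acc by (simp add: accepts_code_iff image_image lit_decode_enc)
next
  assume acc: "accepts_code (code_fst x) (code_snd x)"
  let ?\<alpha> = "map lit_decode (list_decode (code_fst x))"
  have "enc_pair (?\<alpha>, lit_decode (code_snd x)) = x"
    using prod_decode_eq_code[of x] prod_decode_inverse[of x]
    by (simp add: enc_pair_def map_idI enc_lit_decode comp_def)
  moreover have "(?\<alpha>, lit_decode (code_snd x)) \<in> Gamma"
    using acc by (simp add: Gamma_def accepts_code_iff)
  ultimately show "x \<in> enc_pair ` Gamma" by (metis image_eqI)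
qed

lemma ce_if_decidable:
  assumes "decidable 1 (\<lambda>xs. P (xs ! 0))"
  shows "ce {x. P x}"
proof -
  have "decidable (Suc 1) (\<lambda>ys. \<not> P (tl ys ! 0))"
    using decidable_shift[OF decidable_not[OF assms]] .
  then obtain g where g0: "\<forall>ys. length ys = Suc 1 \<longrightarrow> eval g ys (if \<not> P (tl ys ! 0) then 1 else 0)"
    unfolding decidable_def computable_def by blast
  have g: "eval g [y, x] (if P x then 0 else 1)" for x y
    using g0[rule_format, of "[y, x]"] by (simp split: if_splits)
  have "(\<exists>y. eval (Mu g) [x] y) \<longleftrightarrow> P x" for x
  proof
    assume "\<exists>y. eval (Mu g) [x] y"
    then obtain y where "eval g [y, x] 0" by (auto elim: eval.cases)
    then have "(if P x then 0 else 1) = (0::nat)" using g[of y x] eval_deterministic by blast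
    then show "P x" by (simp split: if_splits)
  next
    assume "P x"
    then have "eval g [0, x] 0" using g[of 0 x] by simp
    then show "\<exists>y. eval (Mu g) [x] y" by (blast intro: ev_Mu)
  qed
  then show ?thesis unfolding ce_def by auto
qed

theorem enum_op_Gamma: "enum_op Gamma"
  unfolding enum_op_def using ce_if_decidable[OF decidable_accepts_code] mem_enc_pair_Gamma
  by (metis (no_types, lifting) Collect_cong Collect_mem_eq)

section \<open>The computable embedding\<close>

lemma diag_inj:
  assumes "is_struc B" "is_struc C" "diag B = diag C"
  shows "B = C"
proof -
  have "fst B = fst C"
    using diag_iff(1)[OF assms(1)] diag_iff(1)[OF assms(2)] assms(3) by blast
  moreover have "(a, b) \<in> snd B \<longleftrightarrow> (a, b) \<in> snd C" for a b
    using diag_iff(3)[OF assms(1), of a b] diag_iff(3)[OF assms(2), of a b] assms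
    unfolding is_struc_def by auto
  ultimately show ?thesis by (simp add: prod_eq_iff set_eq_iff)
qed

lemma comp_embedding_by_map:
  assumes "enum_op \<Gamma>"
    and diag: "\<And>A. A \<in> K0 \<Longrightarrow> apply_op \<Gamma> (diag A) = diag (F A)"
    and into: "\<And>A. A \<in> K0 \<Longrightarrow> F A \<in> K1" "\<And>B. B \<in> K1 \<Longrightarrow> is_struc B"
    and iso_iff: "\<And>A A'. A \<in> K0 \<Longrightarrow> A' \<in> K0 \<Longrightarrow> iso A A' \<longleftrightarrow> iso (F A) (F A')"
  shows "comp_embedding \<Gamma> K0 K1"
proof -
  have image_eq: "B = F A" if "A \<in> K0" "is_struc B" "apply_op \<Gamma> (diag A) = diag B" for A B
    using diag_inj[OF that(2) into(2)[OF into(1)[OF that(1)]]] that(3) diag[OF that(1)] by simp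
  show ?thesis
    unfolding comp_embedding_def
  proof (intro conjI ballI allI impI)
    show "\<exists>B\<in>K1. apply_op \<Gamma> (diag A) = diag B" if "A \<in> K0" for A
      using into(1)[OF that] diag[OF that] by blast
    show "iso A A' \<longleftrightarrow> iso B B'" if "A \<in> K0" "A' \<in> K0" "is_struc B" "is_struc B'"
      "apply_op \<Gamma> (diag A) = diag B" "apply_op \<Gamma> (diag A') = diag B'" for A A' B B'
      using image_eq[OF that(1,3,5)] image_eq[OF that(2,4,6)] iso_iff[OF that(1,2)] by simp
  qed (rule assms(1))
qed

lemma iso_iff_of_two_classes:
  assumes "iso A X \<or> iso A Y" "iso B X \<or> iso B Y" "\<not> iso X Y" "\<not> iso X' Y'"
    and "iso A X \<Longrightarrow> iso A' X'" "iso A Y \<Longrightarrow> iso A' Y'"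
    and "iso B X \<Longrightarrow> iso B' X'" "iso B Y \<Longrightarrow> iso B' Y'"
  shows "iso A B \<longleftrightarrow> iso A' B'"
proof -
  have same: "iso P Q" if "iso P Z" "iso Q Z" for P :: "'p struc" and Q :: "'q struc" and Z :: "'z struc"
    using iso_trans[OF that(1) iso_sym[OF that(2)]] .
  have different: "\<not> iso P Q" if "iso P Z" "iso Q W" "\<not> iso Z W"
    for P :: "'p struc" and Q :: "'q struc" and Z :: "'z struc" and W :: "'w struc"
  proof
    assume "iso P Q"
    then have "iso Z W" using iso_trans[OF iso_trans[OF iso_sym[OF that(1)]] that(2)] by blast
    then show False using that(3) by blast
  qed
  from assms(1,2) consider "iso A X" "iso B X" | "iso A X" "iso B Y" | "iso A Y" "iso B X"
    | "iso A Y" "iso B Y" by blast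
  then show ?thesis
  proof cases
    case 1
    then show ?thesis using same[OF 1] same[OF assms(5)[OF 1(1)] assms(7)[OF 1(2)]] by blast
  next
    case 2
    then show ?thesis
      using different[OF 2 assms(3)] different[OF assms(5)[OF 2(1)] assms(8)[OF 2(2)] assms(4)]
      by blast
  next
    case 3
    have "\<not> iso Y X" "\<not> iso Y' X'" using assms(3,4) iso_sym by blast+
    then show ?thesis using different[OF 3] different[OF assms(6)[OF 3(1)] assms(7)[OF 3(2)]] by blast
  next
    case 4
    then show ?thesis using same[OF 4] same[OF assms(6)[OF 4(1)] assms(8)[OF 4(2)]] by blast
  qed
qed

lemma iso_Phi_omega_pow:
  assumes "is_struc A" "iso A (omega_pow_nat (Suc n))"
  shows "iso (Phi A) (omega_pow_omega_plus n)"
proof -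
  obtain h where "bij_betw h (omega_pow_dom {..n}) (fst A)"
    "\<forall>x\<in>omega_pow_dom {..n}. \<forall>y\<in>omega_pow_dom {..n}.
       (x, y) \<in> omega_pow_less {..n} nat_less \<longleftrightarrow> (h x, h y) \<in> snd A"
    using iso_sym[OF assms(2)] unfolding iso_def omega_pow_nat_Suc_eq fst_conv snd_conv by blast
  then interpret omega_pow_copy n A h
    using assms(1) by unfold_locales auto
  show ?thesis
    using iso_trans[OF iso_sym[OF iso_hlist_order_Phi] iso_hlist_order] .
qed

lemma iso_Phi_rev_omega_pow:
  assumes "is_struc A" "iso A (rev_order (omega_pow_nat (Suc n)))"
  shows "iso (Phi A) (rev_order (omega_pow_omega_plus n))"
proof -
  have "is_struc (rev_order A)" using assms(1) by (auto simp: is_struc_def rev_order_def)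
  moreover have "iso (rev_order A) (omega_pow_nat (Suc n))"
    using iso_rev_order[OF assms(2)] by simp
  ultimately have "iso (rev_order (Phi (rev_order A))) (rev_order (omega_pow_omega_plus n))"
    by (intro iso_rev_order iso_Phi_omega_pow)
  then show ?thesis by (simp add: Phi_rev_order)
qed

lemma omega_pow_nat_not_iso_rev: "\<not> iso (omega_pow_nat (Suc n)) (rev_order (omega_pow_nat (Suc n)))"
  unfolding omega_pow_nat_def
  by (rule omega_pow_not_iso_rev[OF strict_linear_order_on_nat_less]) blast

lemma omega_pow_omega_plus_not_iso_rev:
  "\<not> iso (omega_pow_omega_plus n) (rev_order (omega_pow_omega_plus n))"
  unfolding omega_pow_omega_plus_def
  by (rule omega_pow_not_iso_rev[OF strict_linear_order_on_omega_plus_lt]) simp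

lemma is_linorder_if_in_iso_class2:
  assumes "A \<in> iso_class2 (omega_pow_nat (Suc n)) (rev_order (omega_pow_nat (Suc n)))"
  shows "is_linorder A"
proof -
  have "is_linorder (omega_pow_nat (Suc n))" "is_linorder (rev_order (omega_pow_nat (Suc n)))"
    unfolding omega_pow_nat_def
    by (intro is_linorder_omega_pow is_linorder_rev_order strict_linear_order_on_nat_less)+
  then show ?thesis using assms is_linorder_iso unfolding iso_class2_def by blast
qed

lemma Phi_in_iso_class2:
  assumes "A \<in> iso_class2 (omega_pow_nat (Suc n)) (rev_order (omega_pow_nat (Suc n)))"
  shows "Phi A \<in> iso_class2 (omega_pow_omega_plus n) (rev_order (omega_pow_omega_plus n))"
  using assms iso_Phi_omega_pow iso_Phi_rev_omega_pow is_struc_Phi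
  unfolding iso_class2_def by blast

lemma iso_iff_iso_Phi:
  assumes "A \<in> iso_class2 (omega_pow_nat (Suc n)) (rev_order (omega_pow_nat (Suc n)))"
    and "A' \<in> iso_class2 (omega_pow_nat (Suc n)) (rev_order (omega_pow_nat (Suc n)))"
  shows "iso A A' \<longleftrightarrow> iso (Phi A) (Phi A')"
proof -
  have struc: "is_struc A" "is_struc A'"
    and classes: "iso A (omega_pow_nat (Suc n)) \<or> iso A (rev_order (omega_pow_nat (Suc n)))"
      "iso A' (omega_pow_nat (Suc n)) \<or> iso A' (rev_order (omega_pow_nat (Suc n)))"
    using assms unfolding iso_class2_def by blast+
  show ?thesis
    by (rule iso_iff_of_two_classes[OF classes omega_pow_nat_not_iso_rev
          omega_pow_omega_plus_not_iso_rev])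
      (use struc iso_Phi_omega_pow iso_Phi_rev_omega_pow in blast)+
qed

theorem corollary6p6:
  fixes n :: nat
  shows "iso_class2 (omega_pow_nat (n + 1)) (rev_order (omega_pow_nat (n + 1)))
     \<le>\<^sub>c iso_class2 (omega_pow_omega_plus n) (rev_order (omega_pow_omega_plus n))"
proof -
  let ?K0 = "iso_class2 (omega_pow_nat (Suc n)) (rev_order (omega_pow_nat (Suc n)))"
  let ?K1 = "iso_class2 (omega_pow_omega_plus n) (rev_order (omega_pow_omega_plus n))"
  have "comp_embedding Gamma ?K0 ?K1"
  proof (rule comp_embedding_by_map[where F = Phi, OF enum_op_Gamma])
    fix A assume "A \<in> ?K0"
    then show "apply_op Gamma (diag A) = diag (Phi A)" "Phi A \<in> ?K1"
      using apply_op_Gamma_diag is_linorder_if_in_iso_class2 Phi_in_iso_class2 by blast+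
  next
    fix B assume "B \<in> ?K1"
    then show "is_struc B" by (simp add: iso_class2_def)
  next
    fix A A' assume "A \<in> ?K0" "A' \<in> ?K0"
    then show "iso A A' \<longleftrightarrow> iso (Phi A) (Phi A')" by (rule iso_iff_iso_Phi)
  qed
  then show ?thesis unfolding comp_reducible_def Suc_eq_plus1 by blast
qed

end
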